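(* Let $(X,d,G)$ be a $G$-system and $Z\subset X$ a nonempty $G$-invariant subset. Then for every Følner sequence $\{F_n\}$ of $G$, $$\overline{\mathrm{mdim}}_M(G,Z,\{F_n\},d)=\limsup_{\epsilon\to0}\frac{1}{\log\frac1\epsilon}\inf_{\mathrm{diam}(\mathcal U)\le\epsilon}h_{top}(G,Z,\mathcal U),\qquad\underline{\mathrm{mdim}}_M(G,Z,\{F_n\},d)=\liminf_{\epsilon\to0}\frac{1}{\log\frac1\epsilon}\inf_{\mathrm{diam}(\mathcal U)\le\epsilon}h_{top}(G,Z,\mathcal U),$$ where the infimum is over finite open covers $\mathcal U$ of $X$. Moreover, in both formulas $\inf_{\mathrm{diam}(\mathcal U)\le\epsilon}$ may be replaced by $\sup_{\mathrm{diam}(\mathcal U)\le\epsilon,\ \mathrm{Leb}(\mathcal U)\ge\epsilon/4}$ and by $\sup_{\mathrm{Leb}(\mathcal U)\ge\epsilon/4}$.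
   Context: $G$ is a countably infinite discrete amenable group; $(X,d,G)$ a compact metric space with continuous $G$-action by homeomorphisms; $Z$ is $G$-invariant if $gZ=Z$ for all $g$. Følner: nonempty finite $F_n$ with $|gF_n\triangle F_n|/|F_n|\to0$ for all $g$. $d_F(x,y)=\max_{g\in F}d(gx,gy)$; $s(Z,d_F,\epsilon)$ maximal cardinality of a subset of $Z$ with pairwise $d_F$-distances $>\epsilon$; $\overline{\mathrm{mdim}}_M(G,Z,\{F_n\},d)=\limsup_{\epsilon\to0}\frac{1}{\log(1/\epsilon)}\limsup_n\frac1{|F_n|}\log s(Z,d_{F_n},\epsilon)$, and $\underline{\mathrm{mdim}}_M$ with $\liminf_{\epsilon\to0}$. For a finite open cover $\mathcal U$ of $X$ and finite $F\subset G$, $\mathcal U_F=\bigvee_{g\in F}g^{-1}\mathcal U$; $N(\mathcal U,Z)$ is the minimal cardinality of a subfamily of $\mathcal U$ covering $Z$; $h_{top}(G,Z,\mathcal U)=\lim_n\frac1{|F_n|}\log N(\mathcal U_{F_n},Z)$ (exists and is independent of the Følner sequence). $\mathrm{diam}(\mathcal U)$ is the maximal diameter of elements of $\mathcal U$; $\mathrm{Leb}(\mathcal U)$ is the largest $\delta>0$ such that every open ball of radius $\delta$ lies in some element of $\mathcal U$. *)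

theory Defs
  imports "HOL-Analysis.Analysis" "HOL-Library.Liminf_Limsup"
begin

text \<open>The group G is a type of class group_add (written additively, not
necessarily commutative); the space X is the whole type 'x, a compact
metric space. The action is act :: 'g => 'x => 'x.\<close>

definition folner :: "(nat \<Rightarrow> 'g::group_add set) \<Rightarrow> bool" where
  "folner F \<longleftrightarrow> (\<forall>n. finite (F n) \<and> F n \<noteq> {}) \<and>
     (\<forall>g. (\<lambda>n. real (card ((((+) g) ` F n - F n) \<union> (F n - (+) g ` F n)))
                  / real (card (F n))) \<longlonglongrightarrow> 0)"

definition bowen_dist :: "('g \<Rightarrow> 'x::metric_space \<Rightarrow> 'x) \<Rightarrow> 'g set \<Rightarrow> 'x \<Rightarrow> 'x \<Rightarrow> real" where
  "bowen_dist act F x y = Max ((\<lambda>g. dist (act g x) (act g y)) ` F)"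

definition sep_num :: "('g \<Rightarrow> 'x::metric_space \<Rightarrow> 'x) \<Rightarrow> 'x set \<Rightarrow> 'g set \<Rightarrow> real \<Rightarrow> nat" where
  "sep_num act Z F eps = Sup {card E | E. finite E \<and> E \<subseteq> Z \<and>
      (\<forall>x\<in>E. \<forall>y\<in>E. x \<noteq> y \<longrightarrow> bowen_dist act F x y > eps)}"

definition upper_mdim_M :: "('g \<Rightarrow> 'x::metric_space \<Rightarrow> 'x) \<Rightarrow> 'x set \<Rightarrow> (nat \<Rightarrow> 'g set) \<Rightarrow> ereal" where
  "upper_mdim_M act Z F = Limsup (at_right 0) (\<lambda>eps. ereal (1 / ln (1 / eps)) *
      limsup (\<lambda>n. ereal (ln (real (sep_num act Z (F n) eps)) / real (card (F n)))))"

definition lower_mdim_M :: "('g \<Rightarrow> 'x::metric_space \<Rightarrow> 'x) \<Rightarrow> 'x set \<Rightarrow> (nat \<Rightarrow> 'g set) \<Rightarrow> ereal" where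
  "lower_mdim_M act Z F = Liminf (at_right 0) (\<lambda>eps. ereal (1 / ln (1 / eps)) *
      limsup (\<lambda>n. ereal (ln (real (sep_num act Z (F n) eps)) / real (card (F n)))))"

definition open_cover :: "'x::topological_space set set \<Rightarrow> bool" where
  "open_cover U \<longleftrightarrow> finite U \<and> (\<forall>V\<in>U. open V) \<and> \<Union>U = UNIV"

definition join_cover :: "('g \<Rightarrow> 'x \<Rightarrow> 'x) \<Rightarrow> 'g set \<Rightarrow> 'x set set \<Rightarrow> 'x set set" where
  "join_cover act F U = {(\<Inter>g\<in>F. act g -` c g) | c. c \<in> F \<rightarrow> U}"

definition cover_num :: "'x set set \<Rightarrow> 'x set \<Rightarrow> nat" where
  "cover_num U Z = Inf {card V | V. V \<subseteq> U \<and> Z \<subseteq> \<Union>V}"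

definition h_top :: "('g \<Rightarrow> 'x \<Rightarrow> 'x) \<Rightarrow> (nat \<Rightarrow> 'g set) \<Rightarrow> 'x set \<Rightarrow> 'x set set \<Rightarrow> real" where
  "h_top act F Z U = lim (\<lambda>n. ln (real (cover_num (join_cover act (F n) U) Z)) / real (card (F n)))"

definition cover_diam :: "'x::metric_space set set \<Rightarrow> real" where
  "cover_diam U = Max (diameter ` U)"

definition cover_leb :: "'x::metric_space set set \<Rightarrow> ereal" where
  "cover_leb U = Sup {ereal \<delta> | \<delta>. \<delta> > 0 \<and> (\<forall>x. \<exists>V\<in>U. ball x \<delta> \<subseteq> V)}"

end

theory Submission
  imports Defs "HOL-Real_Asymp.Real_Asymp"
begin

text \<open>
  Let \<open>S \<epsilon>\<close> be the growth rate \<open>limsup ln s(Z, d_{F n}, \<epsilon>) / card (F n)\<close>.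
  If \<open>diam \<U> \<le> \<epsilon>\<close>, no two points of an \<open>\<epsilon>\<close>-separated set for \<open>d_{F n}\<close> lie in a
  common member of the join \<open>\<U>_{F n}\<close>, so \<open>s \<le> N(\<U>_{F n}, Z)\<close>. If \<open>Leb \<U> \<ge> \<epsilon>/4\<close>, a
  maximal \<open>\<epsilon>/8\<close>-separated set is \<open>\<epsilon>/8\<close>-spanning, and choosing for each of its points
  \<open>x\<close> and each \<open>g \<in> F n\<close> a member of \<open>\<U>\<close> containing the \<open>\<epsilon>/4\<close>-ball around \<open>g x\<close>
  gives members of \<open>\<U>_{F n}\<close> covering \<open>Z\<close>, so \<open>N(\<U>_{F n}, Z) \<le> s(Z, d_{F n}, \<epsilon>/8)\<close>. Compactness provides covers
  with both properties, so each of the three cover quantities lies between \<open>S \<epsilon>\<close> and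
  \<open>S (\<epsilon>/8)\<close>; as \<open>ln (8/\<epsilon>) / ln (1/\<epsilon>) \<longrightarrow> 1\<close>, the normalised limits coincide.

  Since \<open>h_top\<close> is defined as a limit, one also needs that \<open>ln N(\<U>_{F n}, Z) / card (F n)\<close>
  converges. The set function \<open>A \<mapsto> ln N(\<U>_A, Z)\<close> is subadditive and, \<open>Z\<close> being
  invariant, invariant under right translation; the Ornstein-Weiss lemma, proved by
  quasi-tiling a Folner set with translates of earlier, almost invariant Folner sets, gives
  convergence along every Folner sequence.
\<close>

section \<open>Right translates and Folner sequences\<close>

definition rtranslate :: "'g::group_add set \<Rightarrow> 'g \<Rightarrow> 'g set" where
  "rtranslate A c = (\<lambda>a. a + c) ` A"

lemma card_rtranslate [simp]: "card (rtranslate A c) = card A"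
  unfolding rtranslate_def by (rule card_image) (auto simp: inj_on_def)

lemma finite_rtranslate [simp]: "finite (rtranslate A c) \<longleftrightarrow> finite A"
  unfolding rtranslate_def by (rule finite_image_iff) (auto simp: inj_on_def)

lemma mem_rtranslate_iff: "x \<in> rtranslate A c \<longleftrightarrow> x - c \<in> A"
proof
  assume "x \<in> rtranslate A c"
  then show "x - c \<in> A" unfolding rtranslate_def by auto
next
  assume "x - c \<in> A"
  then show "x \<in> rtranslate A c" unfolding rtranslate_def by (rule rev_image_eqI) simp
qed

lemma rtranslate_rtranslate_uminus [simp]: "rtranslate (rtranslate A c) (- c) = A"
  unfolding rtranslate_def image_image by (simp add: add.assoc)

lemma finite_centers_rtranslate_subset:
  assumes "finite F" "T \<noteq> {}"
  shows "finite {c. rtranslate T c \<subseteq> F}"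
proof -
  obtain t where t: "t \<in> T" using assms(2) by blast
  have "{c. rtranslate T c \<subseteq> F} \<subseteq> (\<lambda>f. - t + f) ` F"
  proof
    fix c assume "c \<in> {c. rtranslate T c \<subseteq> F}"
    then have "t + c \<in> F" using t unfolding rtranslate_def by auto
    then show "c \<in> (\<lambda>f. - t + f) ` F" by (rule rev_image_eqI) (simp add: add.assoc[symmetric])
  qed
  then show ?thesis using assms(1) finite_subset by blast
qed

lemma sum_card_rtranslate_Int_le:
  fixes T :: "'g::group_add set"
  assumes "finite T" "finite S" "finite N"
  shows "(\<Sum>c\<in>S. card (rtranslate T c \<inter> N)) \<le> card T * card N"
proof -
  have "(\<Sum>c\<in>S. card (rtranslate T c \<inter> N)) = (\<Sum>c\<in>S. \<Sum>w\<in>N. if w \<in> rtranslate T c then 1 else 0)"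
    using assms by (simp add: sum.If_cases Int_commute Int_def)
  also have "\<dots> = (\<Sum>w\<in>N. card {c\<in>S. w \<in> rtranslate T c})"
    using assms by (subst sum.swap) (simp add: sum.If_cases Int_def)
  also have "\<dots> \<le> (\<Sum>w\<in>N. card T)"
  proof (rule sum_mono)
    fix w
    have "{c\<in>S. w \<in> rtranslate T c} \<subseteq> (\<lambda>t. - t + w) ` T"
    proof
      fix c assume "c \<in> {c\<in>S. w \<in> rtranslate T c}"
      then obtain t where "t \<in> T" "w = t + c" unfolding rtranslate_def by auto
      then show "c \<in> (\<lambda>t. - t + w) ` T" by (intro rev_image_eqI[of t]) simp_all
    qed
    then show "card {c\<in>S. w \<in> rtranslate T c} \<le> card T"
      using assms(1) by (meson card_image_le card_mono finite_imageI order_trans)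
  qed
  finally show ?thesis by (simp add: mult.commute)
qed

lemma card_centers_rtranslate_not_subset:
  fixes A K :: "'g::group_add set"
  assumes "finite A" "finite K"
  shows "card {c\<in>A. \<not> rtranslate K c \<subseteq> A} \<le> (\<Sum>t\<in>K. card ((\<lambda>a. t + a) ` A - A))"
proof -
  have "{c\<in>A. \<not> rtranslate K c \<subseteq> A} = (\<Union>t\<in>K. {c\<in>A. t + c \<notin> A})"
    unfolding rtranslate_def by auto
  then have "card {c\<in>A. \<not> rtranslate K c \<subseteq> A} \<le> (\<Sum>t\<in>K. card {c\<in>A. t + c \<notin> A})"
    using card_UN_le[OF assms(2)] by simp
  also have "\<dots> \<le> (\<Sum>t\<in>K. card ((\<lambda>a. t + a) ` A - A))"
  proof (rule sum_mono)
    fix t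
    have "card {c\<in>A. t + c \<notin> A} = card ((\<lambda>a. t + a) ` {c\<in>A. t + c \<notin> A})"
      by (rule card_image[symmetric]) (auto simp: inj_on_def)
    also have "\<dots> \<le> card ((\<lambda>a. t + a) ` A - A)"
      by (rule card_mono) (use assms in auto)
    finally show "card {c\<in>A. t + c \<notin> A} \<le> card ((\<lambda>a. t + a) ` A - A)" .
  qed
  finally show ?thesis .
qed

lemma folner_finite: "folner F \<Longrightarrow> finite (F n)"
  and folner_nonempty: "folner F \<Longrightarrow> F n \<noteq> {}"
  unfolding folner_def by auto

lemma folner_card_pos: "folner F \<Longrightarrow> 0 < card (F n)"
  using folner_finite[of F n] folner_nonempty[of F n] by (simp add: card_gt_0_iff)

lemma folner_eventually_sum_translate_le:
  fixes s :: "'g \<Rightarrow> 'g::group_add" and \<gamma> :: real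
  assumes "folner F" "finite K" "0 < \<gamma>"
  shows "\<forall>\<^sub>F n in sequentially. real (\<Sum>t\<in>K. card ((\<lambda>a. s t + a) ` F n - F n)) \<le> \<gamma> * card (F n)"
proof -
  have ratio: "(\<lambda>n. real (card ((\<lambda>a. g + a) ` F n - F n)) / card (F n)) \<longlonglongrightarrow> 0" for g
  proof (rule tendsto_sandwich[OF _ _ tendsto_const])
    show "\<forall>\<^sub>F n in sequentially. real (card ((\<lambda>a. g + a) ` F n - F n)) / card (F n)
        \<le> real (card (((+) g ` F n - F n) \<union> (F n - (+) g ` F n))) / card (F n)"
      using folner_finite[OF assms(1)]
      by (intro always_eventually allI divide_right_mono) (auto intro: card_mono)
    show "(\<lambda>n. real (card (((+) g ` F n - F n) \<union> (F n - (+) g ` F n))) / card (F n)) \<longlonglongrightarrow> 0"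
      using assms(1) unfolding folner_def by blast
  qed simp
  have "(\<lambda>n. \<Sum>t\<in>K. real (card ((\<lambda>a. s t + a) ` F n - F n)) / card (F n)) \<longlonglongrightarrow> (\<Sum>t\<in>K. 0)"
    by (intro tendsto_sum ratio)
  then have "\<forall>\<^sub>F n in sequentially. (\<Sum>t\<in>K. real (card ((\<lambda>a. s t + a) ` F n - F n)) / card (F n)) < \<gamma>"
    using assms(3) by (simp add: order_tendstoD(2))
  then show ?thesis
  proof eventually_elim
    case (elim n)
    then show ?case
      using folner_card_pos[OF assms(1), of n] by (simp add: sum_divide_distrib[symmetric] divide_less_eq)
  qed
qed

section \<open>Quasi-tilings\<close>

lemma card_UN_insert_Diff:
  assumes "finite C" "\<And>c. finite (f c)"
  shows "card ((\<Union>x\<in>insert c C. f x) - W) = card ((\<Union>x\<in>C. f x) - W) + card (f c - (W \<union> (\<Union>x\<in>C. f x)))"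
proof -
  have "(\<Union>x\<in>insert c C. f x) - W = ((\<Union>x\<in>C. f x) - W) \<union> (f c - (W \<union> (\<Union>x\<in>C. f x)))" by auto
  moreover have "card (((\<Union>x\<in>C. f x) - W) \<union> (f c - (W \<union> (\<Union>x\<in>C. f x))))
      = card ((\<Union>x\<in>C. f x) - W) + card (f c - (W \<union> (\<Union>x\<in>C. f x)))"
    using assms by (intro card_Un_disjoint) auto
  ultimately show ?thesis by simp
qed

lemma greedy_rtranslates:
  fixes T W A :: "'g::group_add set" and \<beta> :: real
  assumes "finite A" "finite T" "T \<noteq> {}" "0 < \<beta>" "\<beta> < 1"
  obtains C where "finite C" "\<And>c. c \<in> C \<Longrightarrow> rtranslate T c \<subseteq> A"
    "(1 - \<beta>) * card T * card C \<le> card ((\<Union>c\<in>C. rtranslate T c) - W)"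
    "\<And>c. rtranslate T c \<subseteq> A \<Longrightarrow>
       card (rtranslate T c - (W \<union> (\<Union>c\<in>C. rtranslate T c))) < (1 - \<beta>) * card T"
proof -
  define centers where "centers = {c. rtranslate T c \<subseteq> A}"
  have finite_centers: "finite centers"
    unfolding centers_def using assms(1,3) by (rule finite_centers_rtranslate_subset)
  define good where "good C \<longleftrightarrow> C \<subseteq> centers \<and>
    (1 - \<beta>) * card T * card C \<le> card ((\<Union>c\<in>C. rtranslate T c) - W)" for C
  have "\<exists>C. good C \<and> (\<forall>C'. good C' \<longrightarrow> card C' \<le> card C)"
    by (rule ex_has_greatest_nat[of good "{}" card "Suc (card centers)"])
      (use finite_centers in \<open>auto simp: good_def intro: le_imp_less_Suc card_mono\<close>)
  then obtain C where C: "good C" and maximal: "\<And>C'. good C' \<Longrightarrow> card C' \<le> card C"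
    by blast
  have "finite C" using C finite_centers finite_subset unfolding good_def by blast
  show ?thesis
  proof (rule that)
    show "finite C" by fact
    show "\<And>c. c \<in> C \<Longrightarrow> rtranslate T c \<subseteq> A" using C unfolding good_def centers_def by auto
    show "(1 - \<beta>) * card T * card C \<le> card ((\<Union>c\<in>C. rtranslate T c) - W)"
      using C unfolding good_def by blast
    fix c assume c: "rtranslate T c \<subseteq> A"
    let ?new = "rtranslate T c - (W \<union> (\<Union>c\<in>C. rtranslate T c))"
    show "card ?new < (1 - \<beta>) * card T"
    proof (rule ccontr)
      assume large: "\<not> card ?new < (1 - \<beta>) * card T"
      have "c \<notin> C"
      proof
        assume "c \<in> C"
        then have "?new = {}" by blast
        then have "card ?new = 0" by (simp only: card.empty)
        moreover have "0 < (1 - \<beta>) * card T" using assms by (simp add: card_gt_0_iff)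
        ultimately show False using large by simp
      qed
      have "card ((\<Union>c\<in>insert c C. rtranslate T c) - W) = card ((\<Union>c\<in>C. rtranslate T c) - W) + card ?new"
        using card_UN_insert_Diff[OF \<open>finite C\<close>, of "rtranslate T"] assms(2) by simp
      moreover have "(1 - \<beta>) * card T * card (insert c C) = (1 - \<beta>) * card T * card C + (1 - \<beta>) * card T"
        using \<open>c \<notin> C\<close> \<open>finite C\<close> by (simp add: algebra_simps)
      ultimately have "good (insert c C)"
        using C c large unfolding good_def centers_def by auto
      then have "card (insert c C) \<le> card C" by (rule maximal)
      then show False using \<open>c \<notin> C\<close> \<open>finite C\<close> by simp
    qed
  qed
qed

definition tiles_Union :: "(nat \<Rightarrow> 'g::group_add set) \<Rightarrow> (nat \<times> 'g) set \<Rightarrow> 'g set" where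
  "tiles_Union R P = (\<Union>p\<in>P. rtranslate (R (fst p)) (snd p))"

text \<open>The last condition is the counting form of
  Ornstein and Weiss's \<open>\<beta>\<close>-disjointness: overlaps waste at most a \<open>\<beta>\<close>-fraction of the total
  size of the tiles.\<close>

definition quasi_tiling :: "real \<Rightarrow> (nat \<Rightarrow> 'g::group_add set) \<Rightarrow> 'g set \<Rightarrow> (nat \<times> 'g) set \<Rightarrow> bool" where
  "quasi_tiling \<beta> R A P \<longleftrightarrow> finite P \<and> tiles_Union R P \<subseteq> A \<and>
     (1 - \<beta>) * (\<Sum>p\<in>P. card (R (fst p))) \<le> card (tiles_Union R P)"

lemma quasi_tiling_empty: "quasi_tiling \<beta> R A {}"
  unfolding quasi_tiling_def tiles_Union_def by simp

lemma card_free_centers_le: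
  fixes T :: "'g::group_add set" and \<beta> :: real
  assumes "finite A" "finite T" "T \<noteq> {}" "finite C"
    and maximal: "\<And>c. rtranslate T c \<subseteq> A \<Longrightarrow>
       card (rtranslate T c - (W \<union> (\<Union>c\<in>C. rtranslate T c))) < (1 - \<beta>) * card T"
  shows "\<beta> * card {c. rtranslate T c \<subseteq> A - W} \<le> card ((\<Union>c\<in>C. rtranslate T c) - W)"
proof -
  define U where "U = (\<Union>c\<in>C. rtranslate T c)"
  define I where "I = {c. rtranslate T c \<subseteq> A - W}"
  have "finite I"
    unfolding I_def using assms(1,3) by (intro finite_centers_rtranslate_subset) auto
  have "\<beta> * card T \<le> card (rtranslate T c \<inter> (U - W))" if "c \<in> I" for c
  proof -
    have sub: "rtranslate T c \<subseteq> A" and disj: "rtranslate T c \<inter> W = {}"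
      using that unfolding I_def by auto
    have "rtranslate T c - (U - W) = rtranslate T c - (W \<union> U)" using disj by blast
    then have "real (card T) = card (rtranslate T c \<inter> (U - W)) + card (rtranslate T c - (W \<union> U))"
      using card_Int_Diff[of "rtranslate T c" "U - W"] assms(2) by simp
    moreover have "(1 - \<beta>) * card T = card T - \<beta> * card T" by (simp add: algebra_simps)
    ultimately show ?thesis using maximal[OF sub] unfolding U_def by linarith
  qed
  then have "card I * (\<beta> * card T) \<le> (\<Sum>c\<in>I. real (card (rtranslate T c \<inter> (U - W))))"
    using sum_mono[of I "\<lambda>_. \<beta> * card T"] by simp
  also have "\<dots> \<le> card T * card (U - W)"
  proof -
    have "(\<Sum>c\<in>I. card (rtranslate T c \<inter> (U - W))) \<le> card T * card (U - W)"
      by (rule sum_card_rtranslate_Int_le) (use assms(2,4) \<open>finite I\<close> in \<open>auto simp: U_def\<close>)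
    then show ?thesis by (metis of_nat_le_iff of_nat_mult of_nat_sum)
  qed
  finally have "card T * (\<beta> * card I) \<le> card T * card (U - W)" by (simp add: algebra_simps)
  moreover have "0 < card T" using assms(2,3) by (simp add: card_gt_0_iff)
  ultimately show ?thesis unfolding I_def U_def by (simp add: mult_le_cancel_left_pos)
qed

text \<open>If \<open>T + c\<close> stays inside \<open>A\<close> but meets a tile \<open>R i + c'\<close> that misses \<open>c\<close>, then \<open>c - c'\<close>
  lies in the boundary \<open>(-t + R i) - R i\<close> for some \<open>t \<in> T\<close>.\<close>

lemma Diff_tiles_Union_subset:
  fixes A T :: "'g::group_add set"
  shows "A - tiles_Union R P \<subseteq> {c. rtranslate T c \<subseteq> A - tiles_Union R P} \<union>
     {c\<in>A. \<not> rtranslate T c \<subseteq> A} \<union>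
     (\<Union>p\<in>P. \<Union>t\<in>T. rtranslate ((\<lambda>a. - t + a) ` R (fst p) - R (fst p)) (snd p))"
proof
  fix c assume c: "c \<in> A - tiles_Union R P"
  consider "rtranslate T c \<subseteq> A - tiles_Union R P" | "\<not> rtranslate T c \<subseteq> A"
    | t where "t \<in> T" "t + c \<in> tiles_Union R P"
    unfolding rtranslate_def by blast
  then show "c \<in> {c. rtranslate T c \<subseteq> A - tiles_Union R P} \<union> {c\<in>A. \<not> rtranslate T c \<subseteq> A} \<union>
     (\<Union>p\<in>P. \<Union>t\<in>T. rtranslate ((\<lambda>a. - t + a) ` R (fst p) - R (fst p)) (snd p))"
  proof cases
    case 3
    then obtain p where p: "p \<in> P" "t + c \<in> rtranslate (R (fst p)) (snd p)"
      unfolding tiles_Union_def by blast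
    have "c \<notin> rtranslate (R (fst p)) (snd p)" using c p(1) unfolding tiles_Union_def by blast
    moreover have "c - snd p = - t + (t + c - snd p)" by (metis add_diff_eq minus_add_cancel)
    ultimately have "c - snd p \<in> (\<lambda>a. - t + a) ` R (fst p) - R (fst p)"
      using p(2) unfolding mem_rtranslate_iff by auto
    then show ?thesis using p(1) \<open>t \<in> T\<close> unfolding mem_rtranslate_iff[symmetric] by blast
  qed (use c in blast)+
qed

lemma quasi_tiling_Un_rtranslates:
  fixes \<beta> :: real
  assumes "quasi_tiling \<beta> R A P" "finite A" "finite C" "\<And>c. c \<in> C \<Longrightarrow> rtranslate (R j) c \<subseteq> A"
    and "(1 - \<beta>) * card (R j) * card C \<le> card ((\<Union>c\<in>C. rtranslate (R j) c) - tiles_Union R P)"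
    and "\<And>p. p \<in> P \<Longrightarrow> fst p \<noteq> j"
  shows "quasi_tiling \<beta> R A (P \<union> (\<lambda>c. (j, c)) ` C)"
proof -
  define W where "W = tiles_Union R P"
  define U where "U = (\<Union>c\<in>C. rtranslate (R j) c)"
  have P: "finite P" "W \<subseteq> A" "(1 - \<beta>) * (\<Sum>p\<in>P. card (R (fst p))) \<le> card W"
    using assms(1) unfolding quasi_tiling_def W_def by auto
  have C: "(1 - \<beta>) * card (R j) * card C \<le> card (U - W)" using assms(5) unfolding U_def W_def .
  have "U \<subseteq> A" using assms(4) unfolding U_def by auto
  then have "finite U" using assms(2) by (rule finite_subset)
  have tiles: "tiles_Union R (P \<union> (\<lambda>c. (j, c)) ` C) = W \<union> U"
    unfolding W_def U_def tiles_Union_def by auto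
  have "P \<inter> (\<lambda>c. (j, c)) ` C = {}" using assms(6) by force
  then have "(\<Sum>p\<in>P \<union> (\<lambda>c. (j, c)) ` C. card (R (fst p))) = (\<Sum>p\<in>P. card (R (fst p))) + card C * card (R j)"
    using P(1) assms(3) by (simp add: sum.union_disjoint sum.reindex inj_on_def)
  moreover have "card (W \<union> U) = card W + card (U - W)"
    using card_Un_disjoint[of W "U - W"] finite_subset[OF P(2) assms(2)] \<open>finite U\<close> by simp
  ultimately show ?thesis
    using P C assms(3) \<open>U \<subseteq> A\<close> unfolding quasi_tiling_def tiles by (simp add: algebra_simps)
qed

lemma card_Diff_Un_le:
  fixes \<beta> \<delta> :: real
  assumes "finite A" "U \<subseteq> A" "0 \<le> \<beta>" "\<beta> \<le> 1" "0 \<le> \<delta>"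
    and "\<beta> * card I \<le> card (U - W)" "card (A - W) \<le> card I + \<delta>"
  shows "card (A - (W \<union> U)) \<le> (1 - \<beta>) * card (A - W) + \<delta>"
proof -
  have "A - W = (A - (W \<union> U)) \<union> (U - W)" using assms(2) by blast
  moreover have "card ((A - (W \<union> U)) \<union> (U - W)) = card (A - (W \<union> U)) + card (U - W)"
    using assms(1,2) finite_subset by (intro card_Un_disjoint) auto
  ultimately have "card (A - W) = card (A - (W \<union> U)) + card (U - W)" by simp
  moreover have "\<beta> * (card (A - W) - \<delta>) \<le> \<beta> * card I"
    using assms(3,7) by (intro mult_left_mono) auto
  moreover have "\<beta> * \<delta> \<le> \<delta>" using assms(3-5) by (intro mult_left_le_one_le)
  ultimately show ?thesis using assms(6) by (simp add: algebra_simps)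
qed

text \<open>The shapes are placed in the order \<open>R (n - 1), \<dots>, R 0\<close>: each shape is almost invariant under
  the shapes placed after it, and \<open>A\<close> is almost invariant under all of them.\<close>

context
  fixes R :: "nat \<Rightarrow> 'g::group_add set" and n :: nat and \<beta> \<gamma> :: real and A :: "'g set"
  assumes beta: "0 < \<beta>" "\<beta> \<le> 1/2" and gamma: "0 \<le> \<gamma>"
    and finite_R: "\<And>i. finite (R i)" and R_nonempty: "\<And>i. i < n \<Longrightarrow> R i \<noteq> {}"
    and R_invariant: "\<And>j i. j < i \<Longrightarrow> i < n \<Longrightarrow>
      real (\<Sum>t\<in>R j. card ((\<lambda>a. - t + a) ` R i - R i)) \<le> \<gamma> * card (R i)"
    and finite_A: "finite A"
    and A_invariant: "\<And>j. j < n \<Longrightarrow> real (\<Sum>t\<in>R j. card ((\<lambda>a. t + a) ` A - A)) \<le> \<gamma> * card A"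
begin

lemma card_tile_boundaries_le:
  assumes "j < n" "quasi_tiling \<beta> R A P" "\<And>p. p \<in> P \<Longrightarrow> j < fst p \<and> fst p < n"
  shows "card (\<Union>p\<in>P. \<Union>t\<in>R j. rtranslate ((\<lambda>a. - t + a) ` R (fst p) - R (fst p)) (snd p))
    \<le> 2 * \<gamma> * card A"
proof -
  have P: "finite P" "tiles_Union R P \<subseteq> A"
    and disjoint: "(1 - \<beta>) * (\<Sum>p\<in>P. card (R (fst p))) \<le> card (tiles_Union R P)"
    using assms(2) unfolding quasi_tiling_def by auto
  let ?boundary = "\<lambda>p t. rtranslate ((\<lambda>a. - t + a) ` R (fst p) - R (fst p)) (snd p)"
  have "card (\<Union>p\<in>P. \<Union>t\<in>R j. ?boundary p t) \<le> (\<Sum>p\<in>P. card (\<Union>t\<in>R j. ?boundary p t))"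
    by (rule card_UN_le[OF P(1)])
  also have "\<dots> \<le> (\<Sum>p\<in>P. \<Sum>t\<in>R j. card (?boundary p t))"
    by (intro sum_mono card_UN_le finite_R)
  finally have "real (card (\<Union>p\<in>P. \<Union>t\<in>R j. ?boundary p t))
      \<le> (\<Sum>p\<in>P. real (\<Sum>t\<in>R j. card ((\<lambda>a. - t + a) ` R (fst p) - R (fst p))))"
    unfolding card_rtranslate of_nat_sum[symmetric] by (simp only: of_nat_le_iff)
  also have "\<dots> \<le> (\<Sum>p\<in>P. \<gamma> * card (R (fst p)))"
    by (rule sum_mono) (use R_invariant assms(3) in auto)
  also have "\<dots> = \<gamma> * (\<Sum>p\<in>P. card (R (fst p)))"
    by (simp add: sum_distrib_left)
  also have "\<dots> \<le> \<gamma> * (2 * card A)"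
  proof (rule mult_left_mono[OF _ gamma])
    have "real (card (tiles_Union R P)) \<le> card A" using card_mono[OF finite_A P(2)] by simp
    moreover have "(1/2) * real (\<Sum>p\<in>P. card (R (fst p))) \<le> (1 - \<beta>) * (\<Sum>p\<in>P. card (R (fst p)))"
      using beta by (intro mult_right_mono) (auto intro: sum_nonneg)
    ultimately show "real (\<Sum>p\<in>P. card (R (fst p))) \<le> 2 * card A"
      using disjoint by linarith
  qed
  finally show ?thesis by simp
qed

lemma card_Diff_tiles_Union_le:
  assumes "j < n" "quasi_tiling \<beta> R A P" "\<And>p. p \<in> P \<Longrightarrow> j < fst p \<and> fst p < n"
  shows "card (A - tiles_Union R P)
    \<le> card {c. rtranslate (R j) c \<subseteq> A - tiles_Union R P} + 3 * \<gamma> * card A"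
proof -
  let ?free = "{c. rtranslate (R j) c \<subseteq> A - tiles_Union R P}"
  let ?leaving = "{c\<in>A. \<not> rtranslate (R j) c \<subseteq> A}"
  let ?boundary = "\<Union>p\<in>P. \<Union>t\<in>R j. rtranslate ((\<lambda>a. - t + a) ` R (fst p) - R (fst p)) (snd p)"
  have "finite ?free"
    using finite_A R_nonempty[OF assms(1)] by (intro finite_centers_rtranslate_subset) auto
  moreover have "finite ?boundary" using assms(2) finite_R unfolding quasi_tiling_def by auto
  ultimately have "card (A - tiles_Union R P) \<le> card (?free \<union> ?leaving \<union> ?boundary)"
    using finite_A by (intro card_mono Diff_tiles_Union_subset) auto
  also have "\<dots> \<le> card ?free + card ?leaving + card ?boundary"
    by (rule order_trans[OF card_Un_le]) (simp add: card_Un_le)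
  finally have "card (A - tiles_Union R P) \<le> card ?free + card ?leaving + card ?boundary" .
  moreover have "card ?leaving \<le> (\<Sum>t\<in>R j. card ((\<lambda>a. t + a) ` A - A))"
    by (rule card_centers_rtranslate_not_subset[OF finite_A finite_R])
  then have "real (card ?leaving) \<le> \<gamma> * card A"
    using A_invariant[OF assms(1)] by (simp only: of_nat_le_iff[symmetric])
  moreover have "card ?boundary \<le> 2 * \<gamma> * card A" by (rule card_tile_boundaries_le[OF assms])
  ultimately show ?thesis by linarith
qed

lemma quasi_tiling_step:
  assumes "j < n" "quasi_tiling \<beta> R A P" "\<And>p. p \<in> P \<Longrightarrow> j < fst p \<and> fst p < n"
  obtains P' where "quasi_tiling \<beta> R A P'" "\<And>p. p \<in> P' \<Longrightarrow> j \<le> fst p \<and> fst p < n"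
    "card (A - tiles_Union R P') \<le> (1 - \<beta>) * card (A - tiles_Union R P) + 3 * \<gamma> * card A"
proof -
  define W where "W = tiles_Union R P"
  obtain C where C: "finite C" "\<And>c. c \<in> C \<Longrightarrow> rtranslate (R j) c \<subseteq> A"
    and C_disjoint: "(1 - \<beta>) * card (R j) * card C \<le> card ((\<Union>c\<in>C. rtranslate (R j) c) - W)"
    and C_maximal: "\<And>c. rtranslate (R j) c \<subseteq> A \<Longrightarrow>
      card (rtranslate (R j) c - (W \<union> (\<Union>c\<in>C. rtranslate (R j) c))) < (1 - \<beta>) * card (R j)"
    using greedy_rtranslates[OF finite_A finite_R R_nonempty[OF assms(1)], of \<beta> W] beta by auto
  define U where "U = (\<Union>c\<in>C. rtranslate (R j) c)"
  define P' where "P' = P \<union> (\<lambda>c. (j, c)) ` C"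
  have "quasi_tiling \<beta> R A P'"
    unfolding P'_def using assms(2) finite_A C C_disjoint[unfolded W_def]
    by (rule quasi_tiling_Un_rtranslates) (use assms(3) in auto)
  moreover have "\<And>p. p \<in> P' \<Longrightarrow> j \<le> fst p \<and> fst p < n"
    using assms(1,3) unfolding P'_def by force
  moreover have "card (A - tiles_Union R P') \<le> (1 - \<beta>) * card (A - W) + 3 * \<gamma> * card A"
  proof -
    have tiles: "tiles_Union R P' = W \<union> U" unfolding P'_def W_def U_def tiles_Union_def by auto
    have "U \<subseteq> A" using C(2) unfolding U_def by auto
    have free: "\<beta> * card {c. rtranslate (R j) c \<subseteq> A - W} \<le> card (U - W)"
      unfolding U_def using finite_A finite_R R_nonempty[OF assms(1)] C(1) C_maximal
      by (rule card_free_centers_le)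
    have uncovered: "card (A - W) \<le> card {c. rtranslate (R j) c \<subseteq> A - W} + 3 * \<gamma> * card A"
      unfolding W_def by (rule card_Diff_tiles_Union_le[OF assms])
    have "card (A - (W \<union> U)) \<le> (1 - \<beta>) * card (A - W) + 3 * \<gamma> * card A"
      by (rule card_Diff_Un_le[OF finite_A \<open>U \<subseteq> A\<close> _ _ _ free uncovered]) (use beta gamma in auto)
    then show ?thesis unfolding tiles .
  qed
  ultimately show ?thesis using that unfolding W_def by blast
qed

lemma quasi_tiling_exists:
  obtains P where "quasi_tiling \<beta> R A P" "\<And>p. p \<in> P \<Longrightarrow> fst p < n"
    "card (A - tiles_Union R P) \<le> ((1 - \<beta>) ^ n + 3 * n * \<gamma>) * card A"
proof -
  have "\<exists>P. quasi_tiling \<beta> R A P \<and> (\<forall>p\<in>P. n - s \<le> fst p \<and> fst p < n) \<and>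
      card (A - tiles_Union R P) \<le> ((1 - \<beta>) ^ s + 3 * s * \<gamma>) * card A" if "s \<le> n" for s
    using that
  proof (induction s)
    case 0
    show ?case using finite_A by (intro exI[of _ "{}"]) (simp add: quasi_tiling_empty tiles_Union_def)
  next
    case (Suc s)
    then obtain P where P: "quasi_tiling \<beta> R A P" "\<forall>p\<in>P. n - s \<le> fst p \<and> fst p < n"
      and uncovered: "card (A - tiles_Union R P) \<le> ((1 - \<beta>) ^ s + 3 * s * \<gamma>) * card A"
      by auto
    obtain P' where P': "quasi_tiling \<beta> R A P'" "\<And>p. p \<in> P' \<Longrightarrow> n - Suc s \<le> fst p \<and> fst p < n"
      and step: "card (A - tiles_Union R P') \<le> (1 - \<beta>) * card (A - tiles_Union R P) + 3 * \<gamma> * card A"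
      by (rule quasi_tiling_step[of "n - Suc s" P]) (use Suc.prems P in force)+
    have "(1 - \<beta>) * card (A - tiles_Union R P) \<le> (1 - \<beta>) * (((1 - \<beta>) ^ s + 3 * s * \<gamma>) * card A)"
      using uncovered beta by (intro mult_left_mono) auto
    also have "\<dots> \<le> (1 - \<beta>) ^ Suc s * card A + 3 * s * \<gamma> * card A"
      using beta gamma by (simp add: algebra_simps mult_left_le_one_le)
    finally show ?case using P' step by (intro exI[of _ P']) (auto simp: algebra_simps)
  qed
  from this[of n] show ?thesis using that by auto
qed

end

section \<open>The Ornstein-Weiss lemma\<close>

lemma convergent_if_frequently_less_imp_eventually_less:
  fixes a :: "nat \<Rightarrow> real"
  assumes bounded: "\<And>n. \<bar>a n\<bar> \<le> B"
    and upper: "\<And>L \<epsilon>. 0 < \<epsilon> \<Longrightarrow> (\<exists>\<^sub>F n in sequentially. a n < L) \<Longrightarrow>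
      (\<forall>\<^sub>F n in sequentially. a n < L + \<epsilon>)"
  shows "convergent a"
proof -
  define l where "l = liminf (\<lambda>n. ereal (a n))"
  have lower: "- B \<le> a n" and upper_bound: "a n \<le> B" for n
    using bounded[of n] by auto
  have "ereal (- B) \<le> l" unfolding l_def
    using lower by (intro Liminf_bounded always_eventually) auto
  moreover have "l \<le> limsup (\<lambda>n. ereal (a n))" unfolding l_def by (rule Liminf_le_Limsup) simp
  moreover have "limsup (\<lambda>n. ereal (a n)) \<le> ereal B"
    using upper_bound by (intro Limsup_bounded always_eventually) auto
  ultimately obtain r where r: "l = ereal r" by (cases l) auto
  have "(\<lambda>n. ereal (a n)) \<longlonglongrightarrow> l"
  proof (rule order_tendstoI)
    fix y assume "y < l"
    then show "\<forall>\<^sub>F n in sequentially. y < ereal (a n)" unfolding l_def by (rule less_LiminfD)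
  next
    fix y assume "l < y"
    then obtain z where z: "l < ereal z" "ereal z < y" using ereal_dense2 by blast
    then obtain w where w: "ereal z < ereal w" "ereal w < y" using ereal_dense2 by blast
    have "\<exists>\<^sub>F n in sequentially. a n < z"
    proof (rule ccontr)
      assume "\<not> (\<exists>\<^sub>F n in sequentially. a n < z)"
      then have "\<forall>\<^sub>F n in sequentially. ereal z \<le> ereal (a n)" by (simp add: not_frequently not_less)
      then have "ereal z \<le> l" unfolding l_def by (rule Liminf_bounded)
      then show False using z(1) by simp
    qed
    then have "\<forall>\<^sub>F n in sequentially. a n < z + (w - z)" using w(1) by (intro upper) auto
    then show "\<forall>\<^sub>F n in sequentially. ereal (a n) < y"
      by (rule eventually_mono) (use w(2) in \<open>auto intro: less_trans[of _ "ereal w"]\<close>)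
  qed
  then show ?thesis unfolding r convergent_def by auto
qed

lemma folner_invariant_chain:
  fixes F :: "nat \<Rightarrow> 'g::group_add set" and \<gamma> :: real and k :: nat
  assumes "folner F" "0 < \<gamma>" "\<exists>\<^sub>F n in sequentially. Q n"
  shows "\<exists>m. (\<forall>i<k. Q (m i)) \<and> (\<forall>j i. j < i \<longrightarrow> i < k \<longrightarrow>
    real (\<Sum>t\<in>F (m j). card ((\<lambda>a. - t + a) ` F (m i) - F (m i))) \<le> \<gamma> * card (F (m i)))"
proof (induction k)
  case 0
  show ?case by simp
next
  case (Suc k)
  then obtain m where m: "\<forall>i<k. Q (m i)" "\<forall>j i. j < i \<longrightarrow> i < k \<longrightarrow>
    real (\<Sum>t\<in>F (m j). card ((\<lambda>a. - t + a) ` F (m i) - F (m i))) \<le> \<gamma> * card (F (m i))"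
    by blast
  have "\<forall>\<^sub>F M in sequentially. \<forall>j\<in>{..<k}.
      real (\<Sum>t\<in>F (m j). card ((\<lambda>a. - t + a) ` F M - F M)) \<le> \<gamma> * card (F M)"
    using folner_eventually_sum_translate_le[OF assms(1) folner_finite[OF assms(1)] assms(2)]
    by (intro eventually_ball_finite) auto
  from frequently_ex[OF frequently_eventually_conj[OF assms(3) this]]
  obtain M where "Q M" "\<forall>j<k. real (\<Sum>t\<in>F (m j). card ((\<lambda>a. - t + a) ` F M - F M)) \<le> \<gamma> * card (F M)"
    by auto
  with m show ?case
    by (intro exI[of _ "m(k := M)"]) (auto simp: less_Suc_eq)
qed

lemma quasi_tiling_error_small:
  fixes L C \<eta> \<epsilon> :: real
  assumes "0 < \<eta>" "\<eta> \<le> 1/2" "0 \<le> L" "0 \<le> C" "2 * \<eta> * (L + C) < \<epsilon>" "(1 - \<eta>) ^ N < \<eta>"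
  shows "L / (1 - \<eta>) + ((1 - \<eta>) ^ N + \<eta>) * C < L + \<epsilon>"
proof -
  have "L \<le> (L + 2 * \<eta> * L) * (1 - \<eta>)"
  proof -
    have "0 \<le> \<eta> * L * (1 - 2 * \<eta>)" using assms by simp
    then show ?thesis by (simp add: algebra_simps)
  qed
  then have "L / (1 - \<eta>) \<le> L + 2 * \<eta> * L" using assms by (simp add: divide_le_eq)
  moreover have "((1 - \<eta>) ^ N + \<eta>) * C \<le> 2 * \<eta> * C"
    using assms by (intro mult_right_mono) auto
  ultimately show ?thesis using assms(5) by (simp add: algebra_simps)
qed

lemma quasi_tiling_parameters:
  fixes L C \<epsilon> :: real
  assumes "0 \<le> L" "0 \<le> C" "0 < \<epsilon>"
  obtains \<eta> \<gamma> :: real and N :: nat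
  where "0 < \<eta>" "\<eta> \<le> 1/2" "0 < \<gamma>" "3 * N * \<gamma> = \<eta>"
    "L / (1 - \<eta>) + ((1 - \<eta>) ^ N + \<eta>) * C < L + \<epsilon>"
proof -
  define \<eta> where "\<eta> = min (1/2) (\<epsilon> / (4 * (L + C + 1)))"
  have "\<eta> \<le> 1/2" unfolding \<eta>_def by (rule min.cobounded1)
  moreover have "0 < \<eta>" unfolding \<eta>_def using assms by simp
  ultimately have \<eta>: "0 < \<eta>" "\<eta> \<le> 1/2" by blast+
  have "0 < 4 * (L + C + 1)" using assms by simp
  moreover have "\<eta> \<le> \<epsilon> / (4 * (L + C + 1))" unfolding \<eta>_def by (rule min.cobounded2)
  ultimately have "\<eta> * (4 * (L + C + 1)) \<le> \<epsilon>" by (simp only: pos_le_divide_eq)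
  moreover have "\<eta> * (2 * (L + C)) < \<eta> * (4 * (L + C + 1))"
    using \<eta> assms by (intro mult_strict_left_mono) auto
  ultimately have "\<eta> * (2 * (L + C)) < \<epsilon>" by linarith
  then have "2 * \<eta> * (L + C) < \<epsilon>" by (simp add: mult_ac)
  obtain N where N: "(1 - \<eta>) ^ N < \<eta>" using real_arch_pow_inv[of \<eta> "1 - \<eta>"] \<eta> by auto
  then have "N \<noteq> 0" using \<eta> by (cases N) auto
  show ?thesis
  proof (rule that[of \<eta> "\<eta> / (3 * N)" N])
    show "3 * N * (\<eta> / (3 * N)) = \<eta>" using \<open>N \<noteq> 0\<close> by simp
    show "L / (1 - \<eta>) + ((1 - \<eta>) ^ N + \<eta>) * C < L + \<epsilon>"
      by (rule quasi_tiling_error_small) (use \<eta> assms \<open>2 * \<eta> * (L + C) < \<epsilon>\<close> N in auto)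
  qed (use \<eta> \<open>N \<noteq> 0\<close> in auto)
qed

text \<open>The Folner condition concerns left translates \<open>g + F n\<close>, so the tiles \<open>R i + c\<close> are right
  translates and \<open>\<phi>\<close> has to be invariant under right translation.\<close>

locale invariant_subadditive =
  fixes \<phi> :: "'g::group_add set \<Rightarrow> real"
  assumes subadditive: "finite A \<Longrightarrow> finite B \<Longrightarrow> \<phi> (A \<union> B) \<le> \<phi> A + \<phi> B"
    and translate_invariant: "finite A \<Longrightarrow> \<phi> (rtranslate A c) = \<phi> A"
    and empty_eq_0: "\<phi> {} = 0"
    and nonneg: "finite A \<Longrightarrow> 0 \<le> \<phi> A"
begin

lemma subadditive_UN:
  "finite I \<Longrightarrow> (\<And>i. i \<in> I \<Longrightarrow> finite (A i)) \<Longrightarrow> \<phi> (\<Union>i\<in>I. A i) \<le> (\<Sum>i\<in>I. \<phi> (A i))"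
proof (induction I rule: finite_induct)
  case empty
  then show ?case by (simp add: empty_eq_0)
next
  case (insert x I)
  then have "\<phi> (A x \<union> (\<Union>i\<in>I. A i)) \<le> \<phi> (A x) + \<phi> (\<Union>i\<in>I. A i)" by (intro subadditive) auto
  with insert show ?case by simp
qed

lemma le_card_mult: "finite A \<Longrightarrow> \<phi> A \<le> card A * \<phi> {0}"
proof -
  assume "finite A"
  have "\<phi> A \<le> (\<Sum>a\<in>A. \<phi> (rtranslate {0} a))"
    using subadditive_UN[OF \<open>finite A\<close>, of "\<lambda>a. rtranslate {0} a"] by (simp add: rtranslate_def)
  then show ?thesis by (simp add: translate_invariant)
qed

lemma le_by_quasi_tiling:
  fixes L :: real
  assumes "quasi_tiling \<beta> R A P" "finite A" "\<beta> < 1" "0 \<le> L" "\<And>i. finite (R i)"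
    and tiles_le: "\<And>p. p \<in> P \<Longrightarrow> \<phi> (R (fst p)) \<le> L * card (R (fst p))"
  shows "\<phi> A \<le> L * card A / (1 - \<beta>) + card (A - tiles_Union R P) * \<phi> {0}"
proof -
  define W where "W = tiles_Union R P"
  define total where "total = (\<Sum>p\<in>P. card (R (fst p)))"
  have P: "finite P" "W \<subseteq> A" "(1 - \<beta>) * total \<le> card W"
    using assms(1) unfolding quasi_tiling_def W_def total_def by auto
  have "\<phi> A = \<phi> (W \<union> (A - W))" using P(2) by (simp add: Un_absorb1)
  also have "\<dots> \<le> \<phi> W + \<phi> (A - W)"
    using P(2) assms(2) by (intro subadditive) (auto intro: finite_subset)
  also have "\<phi> W \<le> (\<Sum>p\<in>P. \<phi> (R (fst p)))"
    using subadditive_UN[OF P(1), of "\<lambda>p. rtranslate (R (fst p)) (snd p)"] assms(5)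
    unfolding W_def tiles_Union_def by (simp add: translate_invariant)
  also have "\<dots> \<le> L * total"
    using sum_mono[of P _ "\<lambda>p. L * card (R (fst p))", OF tiles_le]
    unfolding total_def by (simp add: sum_distrib_left)
  also have "\<dots> \<le> L * card A / (1 - \<beta>)"
  proof -
    have "real (card W) \<le> card A" using card_mono[OF assms(2) P(2)] by simp
    then have "total \<le> card A / (1 - \<beta>)"
      using P(3) assms(3) by (simp add: pos_le_divide_eq mult.commute)
    then have "L * total \<le> L * (card A / (1 - \<beta>))" using assms(4) by (rule mult_left_mono)
    then show ?thesis by simp
  qed
  also have "\<phi> (A - W) \<le> card (A - W) * \<phi> {0}" using assms(2) by (intro le_card_mult) simp
  finally show ?thesis unfolding W_def by simp
qed

lemma normalized_le_by_quasi_tiling: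
  fixes L \<eta> \<gamma> :: real and N :: nat
  assumes "0 < \<eta>" "\<eta> \<le> 1/2" "0 < \<gamma>" "3 * N * \<gamma> = \<eta>" "0 \<le> L"
    and R: "\<And>i. finite (R i)" "\<And>i. R i \<noteq> {}" "\<And>i. i < N \<Longrightarrow> \<phi> (R i) \<le> L * card (R i)"
    and R_invariant: "\<And>j i. j < i \<Longrightarrow> i < N \<Longrightarrow>
      real (\<Sum>t\<in>R j. card ((\<lambda>a. - t + a) ` R i - R i)) \<le> \<gamma> * card (R i)"
    and A: "finite A" "A \<noteq> {}"
    and A_invariant: "\<And>j. j < N \<Longrightarrow> real (\<Sum>t\<in>R j. card ((\<lambda>a. t + a) ` A - A)) \<le> \<gamma> * card A"
  shows "\<phi> A / card A \<le> L / (1 - \<eta>) + ((1 - \<eta>) ^ N + \<eta>) * \<phi> {0}"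
proof -
  obtain P where P: "quasi_tiling \<eta> R A P" "\<And>p. p \<in> P \<Longrightarrow> fst p < N"
    and uncovered: "card (A - tiles_Union R P) \<le> ((1 - \<eta>) ^ N + 3 * N * \<gamma>) * card A"
    by (rule quasi_tiling_exists[of \<eta> \<gamma> R N A]) (use assms in auto)
  have "0 \<le> \<phi> {0}" by (rule nonneg) simp
  have "\<phi> A \<le> L * card A / (1 - \<eta>) + card (A - tiles_Union R P) * \<phi> {0}"
    by (rule le_by_quasi_tiling[OF P(1) A(1)]) (use assms P(2) in auto)
  also have "\<dots> \<le> L * card A / (1 - \<eta>) + ((1 - \<eta>) ^ N + \<eta>) * card A * \<phi> {0}"
    using mult_right_mono[OF uncovered \<open>0 \<le> \<phi> {0}\<close>] assms(4) by simp
  finally have "\<phi> A / card A \<le> (L * card A / (1 - \<eta>) + ((1 - \<eta>) ^ N + \<eta>) * card A * \<phi> {0}) / card A"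
    by (rule divide_right_mono) simp
  also have "\<dots> = L / (1 - \<eta>) + ((1 - \<eta>) ^ N + \<eta>) * \<phi> {0}"
    using A by (simp add: field_simps card_gt_0_iff)
  finally show ?thesis .
qed

lemma eventually_normalized_less:
  assumes folner: "folner F" and "0 < \<epsilon>"
    and frequently_less: "\<exists>\<^sub>F n in sequentially. \<phi> (F n) / card (F n) < L"
  shows "\<forall>\<^sub>F n in sequentially. \<phi> (F n) / card (F n) < L + \<epsilon>"
proof -
  define C where "C = \<phi> {0}"
  have "0 \<le> C" unfolding C_def by (rule nonneg) simp
  obtain n0 where "\<phi> (F n0) / card (F n0) < L" using frequently_ex[OF frequently_less] by blast
  moreover have "0 \<le> \<phi> (F n0) / card (F n0)" using nonneg[OF folner_finite[OF folner]] by simp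
  ultimately have "0 \<le> L" by linarith
  obtain \<eta> \<gamma> :: real and N :: nat where \<eta>: "0 < \<eta>" "\<eta> \<le> 1/2" and "0 < \<gamma>" "3 * N * \<gamma> = \<eta>"
    and estimate: "L / (1 - \<eta>) + ((1 - \<eta>) ^ N + \<eta>) * C < L + \<epsilon>"
    using quasi_tiling_parameters[OF \<open>0 \<le> L\<close> \<open>0 \<le> C\<close> \<open>0 < \<epsilon>\<close>] by blast
  txt \<open>Quasi-tile \<open>F k\<close> by translates of \<open>N\<close> Folner sets on which \<open>\<phi>/card < L\<close>, each almost
    invariant under the earlier ones; for large \<open>k\<close>, \<open>F k\<close> is almost invariant under all of them.\<close>
  obtain m where m_less: "\<And>i. i < N \<Longrightarrow> \<phi> (F (m i)) / card (F (m i)) < L"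
    and m_invariant: "\<And>j i. j < i \<Longrightarrow> i < N \<Longrightarrow>
      real (\<Sum>t\<in>F (m j). card ((\<lambda>a. - t + a) ` F (m i) - F (m i))) \<le> \<gamma> * card (F (m i))"
    using folner_invariant_chain[OF folner \<open>0 < \<gamma>\<close> frequently_less, of N] by blast
  define R where "R i = F (m i)" for i
  have R: "\<And>i. finite (R i)" "\<And>i. R i \<noteq> {}"
    unfolding R_def using folner_finite[OF folner] folner_nonempty[OF folner] by auto
  have R_le: "\<phi> (R i) \<le> L * card (R i)" if "i < N" for i
  proof -
    have "\<phi> (R i) < L * card (R i)"
      using m_less[OF that] folner_card_pos[OF folner, of "m i"] unfolding R_def by (simp add: pos_divide_less_eq)
    then show ?thesis by simp
  qed
  have "\<forall>\<^sub>F k in sequentially. \<forall>j\<in>{..<N}.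
      real (\<Sum>t\<in>R j. card ((\<lambda>a. t + a) ` F k - F k)) \<le> \<gamma> * card (F k)"
    using folner_eventually_sum_translate_le[OF folner R(1) \<open>0 < \<gamma>\<close>, of "\<lambda>t. t"]
    by (intro eventually_ball_finite) auto
  then show ?thesis
  proof eventually_elim
    case (elim k)
    have "\<phi> (F k) / card (F k) \<le> L / (1 - \<eta>) + ((1 - \<eta>) ^ N + \<eta>) * C"
      unfolding C_def
      by (rule normalized_le_by_quasi_tiling[OF \<eta> \<open>0 < \<gamma>\<close> \<open>3 * N * \<gamma> = \<eta>\<close> \<open>0 \<le> L\<close> R R_le])
        (use m_invariant elim folner_finite[OF folner] folner_nonempty[OF folner] in \<open>auto simp: R_def\<close>)
    also have "\<dots> < L + \<epsilon>" by (rule estimate)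
    finally show ?case .
  qed
qed

theorem normalized_convergent:
  assumes "folner F"
  shows "convergent (\<lambda>n. \<phi> (F n) / card (F n))"
proof (rule convergent_if_frequently_less_imp_eventually_less)
  fix n
  have "\<phi> (F n) \<le> card (F n) * \<phi> {0}" using le_card_mult folner_finite[OF assms] .
  then show "\<bar>\<phi> (F n) / card (F n)\<bar> \<le> \<phi> {0}"
    using nonneg[OF folner_finite[OF assms]] folner_card_pos[OF assms, of n] by (simp add: pos_divide_le_eq mult.commute)
qed (rule eventually_normalized_less[OF assms])

end

section \<open>Covering numbers of joins\<close>

lemma join_coverI: "c \<in> A \<rightarrow> U \<Longrightarrow> (\<Inter>g\<in>A. act g -` c g) \<in> join_cover act A U"
  unfolding join_cover_def by blast

lemma finite_join_cover:
  assumes "finite A" "finite U"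
  shows "finite (join_cover act A U)"
proof -
  have "join_cover act A U \<subseteq> (\<lambda>c. \<Inter>g\<in>A. act g -` c g) ` (A \<rightarrow>\<^sub>E U)"
  proof
    fix v assume "v \<in> join_cover act A U"
    then obtain c where "c \<in> A \<rightarrow> U" "v = (\<Inter>g\<in>A. act g -` c g)" unfolding join_cover_def by blast
    then show "v \<in> (\<lambda>c. \<Inter>g\<in>A. act g -` c g) ` (A \<rightarrow>\<^sub>E U)"
      by (intro image_eqI[of _ _ "restrict c A"]) auto
  qed
  then show ?thesis by (rule finite_subset) (use assms in \<open>simp add: finite_PiE\<close>)
qed

lemma Union_join_cover:
  assumes "\<Union>U = UNIV"
  shows "\<Union>(join_cover act A U) = UNIV"
proof -
  have "x \<in> \<Union>(join_cover act A U)" for x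
  proof -
    have "\<forall>g. \<exists>V. V \<in> U \<and> act g x \<in> V"
    proof
      fix g
      have "act g x \<in> \<Union>U" using assms by simp
      then show "\<exists>V. V \<in> U \<and> act g x \<in> V" by (rule UnionE) blast
    qed
    from choice[OF this] obtain c where c: "\<forall>g. c g \<in> U \<and> act g x \<in> c g" ..
    then have "(\<Inter>g\<in>A. act g -` c g) \<in> join_cover act A U" by (intro join_coverI) auto
    moreover have "x \<in> (\<Inter>g\<in>A. act g -` c g)" using c by auto
    ultimately show ?thesis by (rule UnionI)
  qed
  then show ?thesis by auto
qed

lemma cover_num_attained:
  assumes "Z \<subseteq> \<Union>V"
  obtains W where "W \<subseteq> V" "Z \<subseteq> \<Union>W" "card W = cover_num V Z"
proof -
  have "{card W | W. W \<subseteq> V \<and> Z \<subseteq> \<Union>W} \<noteq> {}" using assms by blast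
  then have "cover_num V Z \<in> {card W | W. W \<subseteq> V \<and> Z \<subseteq> \<Union>W}"
    unfolding cover_num_def by (rule Inf_nat_def1)
  then obtain W where "W \<subseteq> V" "Z \<subseteq> \<Union>W" "cover_num V Z = card W" by blast
  then show ?thesis using that by simp
qed

lemma cover_num_le: "W \<subseteq> V \<Longrightarrow> Z \<subseteq> \<Union>W \<Longrightarrow> cover_num V Z \<le> card W"
  unfolding cover_num_def by (rule cInf_lower) auto

lemma cover_num_pos:
  assumes "finite V" "Z \<subseteq> \<Union>V" "Z \<noteq> {}"
  shows "0 < cover_num V Z"
proof -
  obtain W where W: "W \<subseteq> V" "Z \<subseteq> \<Union>W" "card W = cover_num V Z"
    using cover_num_attained[OF assms(2)] .
  have "finite W" using W(1) assms(1) by (rule finite_subset)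
  moreover have "W \<noteq> {}" using W(2) assms(3) by auto
  ultimately have "0 < card W" by (simp add: card_gt_0_iff)
  then show ?thesis using W(3) by simp
qed

lemma cover_num_Int_le:
  assumes "finite V" "finite V'" "Z \<subseteq> \<Union>V" "Z \<subseteq> \<Union>V'"
    and Int: "\<And>a b. a \<in> V \<Longrightarrow> b \<in> V' \<Longrightarrow> \<exists>w\<in>W. a \<inter> b \<subseteq> w"
  shows "cover_num W Z \<le> cover_num V Z * cover_num V' Z"
proof -
  obtain S where S: "S \<subseteq> V" "Z \<subseteq> \<Union>S" "card S = cover_num V Z"
    using cover_num_attained[OF assms(3)] .
  obtain S' where S': "S' \<subseteq> V'" "Z \<subseteq> \<Union>S'" "card S' = cover_num V' Z"
    using cover_num_attained[OF assms(4)] .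
  have "\<forall>p\<in>S \<times> S'. \<exists>w. w \<in> W \<and> fst p \<inter> snd p \<subseteq> w"
  proof
    fix p assume "p \<in> S \<times> S'"
    then have "fst p \<in> V" "snd p \<in> V'" using S(1) S'(1) by auto
    from Int[OF this] show "\<exists>w. w \<in> W \<and> fst p \<inter> snd p \<subseteq> w" by blast
  qed
  from bchoice[OF this] obtain w where w: "\<forall>p\<in>S \<times> S'. w p \<in> W \<and> fst p \<inter> snd p \<subseteq> w p" ..
  have "Z \<subseteq> \<Union>(w ` (S \<times> S'))"
  proof
    fix z assume "z \<in> Z"
    then obtain a b where ab: "a \<in> S" "b \<in> S'" "z \<in> a" "z \<in> b" using S(2) S'(2) by blast
    then have "(a, b) \<in> S \<times> S'" by simp
    moreover from w this have "z \<in> w (a, b)" using ab(3,4) by auto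
    ultimately show "z \<in> \<Union>(w ` (S \<times> S'))" by blast
  qed
  moreover have "w ` (S \<times> S') \<subseteq> W" using w by auto
  ultimately have "cover_num W Z \<le> card (w ` (S \<times> S'))"
    by (rule cover_num_le[rotated])
  also have "\<dots> \<le> card (S \<times> S')"
    by (rule card_image_le[OF finite_cartesian_product[OF finite_subset[OF S(1) assms(1)] finite_subset[OF S'(1) assms(2)]]])
  finally show ?thesis using S(3) S'(3) by (simp add: card_cartesian_product)
qed

lemma cover_num_vimage_le:
  assumes "finite V" "Z \<subseteq> \<Union>V" "h ` Z \<subseteq> Z" and vimage: "\<And>v. v \<in> V \<Longrightarrow> h -` v \<in> V'"
  shows "cover_num V' Z \<le> cover_num V Z"
proof -
  obtain S where S: "S \<subseteq> V" "Z \<subseteq> \<Union>S" "card S = cover_num V Z"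
    using cover_num_attained[OF assms(2)] .
  have "Z \<subseteq> \<Union>((-`) h ` S)"
  proof
    fix z assume "z \<in> Z"
    then have "h z \<in> Z" using assms(3) by blast
    then obtain s where "s \<in> S" "h z \<in> s" using S(2) by blast
    then show "z \<in> \<Union>((-`) h ` S)" by blast
  qed
  moreover have "(-`) h ` S \<subseteq> V'" using S(1) vimage by auto
  ultimately have "cover_num V' Z \<le> card ((-`) h ` S)" by (rule cover_num_le[rotated])
  also have "\<dots> \<le> card S" by (rule card_image_le[OF finite_subset[OF S(1) assms(1)]])
  finally show ?thesis using S(3) by simp
qed

locale invariant_set =
  fixes act :: "'g::group_add \<Rightarrow> 'x \<Rightarrow> 'x" and Z :: "'x set"
  assumes act_add: "\<And>g h x. act (g + h) x = act g (act h x)"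
    and nonempty: "Z \<noteq> {}"
    and invariant: "\<And>g. act g ` Z \<subseteq> Z"
begin

context
  fixes U :: "'x set set"
  assumes finite_U: "finite U" and covers_U: "\<Union>U = UNIV"
begin

lemma Z_subset_Union_join_cover: "Z \<subseteq> \<Union>(join_cover act A U)"
  using Union_join_cover[OF covers_U] by blast

lemma cover_num_join_pos: "finite A \<Longrightarrow> 0 < cover_num (join_cover act A U) Z"
  using finite_join_cover finite_U Z_subset_Union_join_cover nonempty by (intro cover_num_pos) auto

lemma cover_num_join_Un_le:
  assumes "finite A" "finite B"
  shows "cover_num (join_cover act (A \<union> B) U) Z
    \<le> cover_num (join_cover act A U) Z * cover_num (join_cover act B U) Z"
proof (rule cover_num_Int_le)
  show "finite (join_cover act A U)" "finite (join_cover act B U)"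
    using assms finite_U by (simp_all add: finite_join_cover)
  show "Z \<subseteq> \<Union>(join_cover act A U)" "Z \<subseteq> \<Union>(join_cover act B U)"
    by (rule Z_subset_Union_join_cover)+
  fix a b assume "a \<in> join_cover act A U" "b \<in> join_cover act B U"
  then obtain c c' where c: "c \<in> A \<rightarrow> U" "a = (\<Inter>g\<in>A. act g -` c g)"
    and c': "c' \<in> B \<rightarrow> U" "b = (\<Inter>g\<in>B. act g -` c' g)"
    unfolding join_cover_def by blast
  define d where "d g = (if g \<in> A then c g else c' g)" for g
  have "d \<in> A \<union> B \<rightarrow> U" using c(1) c'(1) unfolding d_def by auto
  moreover have "a \<inter> b \<subseteq> (\<Inter>g\<in>A \<union> B. act g -` d g)" unfolding c(2) c'(2) d_def by auto
  ultimately show "\<exists>w\<in>join_cover act (A \<union> B) U. a \<inter> b \<subseteq> w" by (blast intro: join_coverI)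
qed

lemma cover_num_join_rtranslate_le:
  assumes "finite A"
  shows "cover_num (join_cover act (rtranslate A c) U) Z \<le> cover_num (join_cover act A U) Z"
proof (rule cover_num_vimage_le[where h = "act c"])
  show "finite (join_cover act A U)" using assms finite_U by (rule finite_join_cover)
  show "Z \<subseteq> \<Union>(join_cover act A U)" by (rule Z_subset_Union_join_cover)
  show "act c ` Z \<subseteq> Z" by (rule invariant)
  fix v assume "v \<in> join_cover act A U"
  then obtain e where e: "e \<in> A \<rightarrow> U" "v = (\<Inter>g\<in>A. act g -` e g)" unfolding join_cover_def by blast
  have "act c -` v = (\<Inter>g\<in>A. act (g + c) -` e g)" unfolding e(2) by (auto simp: act_add)
  also have "\<dots> = (\<Inter>h\<in>rtranslate A c. act h -` e (h - c))" unfolding rtranslate_def by simp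
  finally have "act c -` v = (\<Inter>h\<in>rtranslate A c. act h -` e (h - c))" .
  moreover have "(\<lambda>h. e (h - c)) \<in> rtranslate A c \<rightarrow> U" using e(1) by (auto simp: mem_rtranslate_iff)
  ultimately show "act c -` v \<in> join_cover act (rtranslate A c) U" by (simp add: join_coverI)
qed

lemma invariant_subadditive_ln_cover_num:
  "invariant_subadditive (\<lambda>A. ln (cover_num (join_cover act A U) Z))"
proof
  fix A B :: "'g set" assume "finite A" "finite B"
  let ?N = "\<lambda>A. real (cover_num (join_cover act A U) Z)"
  have "?N (A \<union> B) \<le> ?N A * ?N B"
    using cover_num_join_Un_le[OF \<open>finite A\<close> \<open>finite B\<close>] by (metis of_nat_le_iff of_nat_mult)
  then have "ln (?N (A \<union> B)) \<le> ln (?N A * ?N B)"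
    using cover_num_join_pos \<open>finite A\<close> \<open>finite B\<close> by simp
  also have "\<dots> = ln (?N A) + ln (?N B)"
    using cover_num_join_pos \<open>finite A\<close> \<open>finite B\<close> by (simp add: ln_mult)
  finally show "ln (?N (A \<union> B)) \<le> ln (?N A) + ln (?N B)" .
next
  fix A :: "'g set" and c assume "finite A"
  then have "cover_num (join_cover act (rtranslate A c) U) Z = cover_num (join_cover act A U) Z"
    using cover_num_join_rtranslate_le[of A c] cover_num_join_rtranslate_le[of "rtranslate A c" "- c"]
    by simp
  then show "ln (cover_num (join_cover act (rtranslate A c) U) Z) = ln (cover_num (join_cover act A U) Z)"
    by simp
next
  have "join_cover act {} U = {UNIV}" unfolding join_cover_def by auto
  then show "ln (cover_num (join_cover act {} U) Z) = 0"
    using cover_num_le[of "{UNIV}" "{UNIV}" Z] cover_num_join_pos[of "{}"] by simp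
next
  fix A :: "'g set" assume "finite A"
  then show "0 \<le> ln (cover_num (join_cover act A U) Z)"
    using cover_num_join_pos by (simp add: Suc_le_eq)
qed

lemma h_top_LIMSEQ:
  assumes "folner F"
  shows "(\<lambda>n. ln (cover_num (join_cover act (F n) U) Z) / card (F n)) \<longlonglongrightarrow> h_top act F Z U"
  using invariant_subadditive.normalized_convergent[OF invariant_subadditive_ln_cover_num assms]
  unfolding h_top_def by (simp add: convergent_LIMSEQ_iff)

end

end

section \<open>Separated sets\<close>

lemma dist_le_bowen_dist: "finite A \<Longrightarrow> g \<in> A \<Longrightarrow> dist (act g x) (act g y) \<le> bowen_dist act A x y"
  unfolding bowen_dist_def by (rule Max_ge) auto

lemma bowen_dist_le:
  "finite A \<Longrightarrow> A \<noteq> {} \<Longrightarrow> (\<And>g. g \<in> A \<Longrightarrow> dist (act g x) (act g y) \<le> r) \<Longrightarrow> bowen_dist act A x y \<le> r"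
  unfolding bowen_dist_def by (subst Max_le_iff) auto

lemma bowen_dist_commute: "bowen_dist act A x y = bowen_dist act A y x"
  unfolding bowen_dist_def by (simp add: dist_commute)

lemma bowen_dist_self: "A \<noteq> {} \<Longrightarrow> bowen_dist act A x x = 0"
  unfolding bowen_dist_def by (simp add: image_constant_conv)

lemma bowen_dist_le_cover_diam:
  fixes act :: "'g \<Rightarrow> 'x::metric_space \<Rightarrow> 'x"
  assumes "bounded (UNIV :: 'x set)" "finite A" "A \<noteq> {}" "finite V"
    and "w \<in> join_cover act A V" "x \<in> w" "y \<in> w"
  shows "bowen_dist act A x y \<le> cover_diam V"
proof -
  obtain c where c: "c \<in> A \<rightarrow> V" "w = (\<Inter>g\<in>A. act g -` c g)"
    using assms(5) unfolding join_cover_def by blast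
  show ?thesis
  proof (rule bowen_dist_le[OF assms(2,3)])
    fix g assume "g \<in> A"
    then have "act g x \<in> c g" "act g y \<in> c g" using assms(6,7) c(2) by auto
    moreover have "bounded (c g)" using assms(1) by (rule bounded_subset) simp
    ultimately have "dist (act g x) (act g y) \<le> diameter (c g)"
      by (intro diameter_bounded_bound)
    also have "\<dots> \<le> cover_diam V"
      unfolding cover_diam_def using assms(4) c(1) \<open>g \<in> A\<close> by (intro Max_ge) auto
    finally show "dist (act g x) (act g y) \<le> cover_diam V" .
  qed
qed

lemma diameter_ball_le:
  assumes "0 \<le> r"
  shows "diameter (ball x r) \<le> 2 * r"
proof (cases "ball x r = {}")
  case False
  have "dist y z \<le> 2 * r" if "y \<in> ball x r" "z \<in> ball x r" for y z
    using that dist_triangle3[of y z x] unfolding mem_ball by linarith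
  then have "(SUP (y, z)\<in>ball x r \<times> ball x r. dist y z) \<le> 2 * r"
    using False by (intro cSUP_least) auto
  then show ?thesis unfolding diameter_def using False by simp
qed (use assms in simp)

lemma ball_subset_ball_net:
  fixes x :: "'x::metric_space"
  assumes "UNIV \<subseteq> (\<Union>p\<in>K. ball p r)" "2 * r \<le> s"
  shows "\<exists>p\<in>K. ball x r \<subseteq> ball p s"
proof -
  have "x \<in> (\<Union>p\<in>K. ball p r)" using assms(1) by (rule subsetD) simp
  then obtain p where p: "p \<in> K" "dist p x < r" by auto
  have "ball x r \<subseteq> ball p s"
  proof
    fix y assume "y \<in> ball x r"
    then show "y \<in> ball p s" using p(2) assms(2) dist_triangle[of p y x] unfolding mem_ball by linarith
  qed
  with p(1) show ?thesis by blast
qed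

text \<open>Balls of radius \<open>\<epsilon>/2\<close> around an \<open>\<epsilon>/4\<close>-net.\<close>

lemma exists_open_cover_diam_leb:
  assumes "compact (UNIV :: 'x::metric_space set)" "0 < \<epsilon>"
  obtains U :: "'x::metric_space set set" where "open_cover U" "cover_diam U \<le> \<epsilon>" "ereal (\<epsilon> / 4) \<le> cover_leb U"
proof -
  have "\<forall>e>0. \<exists>K. finite K \<and> UNIV \<subseteq> (\<Union>p\<in>K. ball (p :: 'x) e)"
    using assms(1) unfolding compact_eq_totally_bounded by (rule conjunct2)
  then have "\<exists>K. finite K \<and> UNIV \<subseteq> (\<Union>p\<in>K. ball (p :: 'x) (\<epsilon> / 4))" using assms(2) by simp
  then obtain K :: "'x set" where K: "finite K" "UNIV \<subseteq> (\<Union>p\<in>K. ball p (\<epsilon> / 4))" by blast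
  then have "K \<noteq> {}" by auto
  define U where "U = (\<lambda>p. ball p (\<epsilon> / 2)) ` K"
  have lebesgue: "\<exists>V\<in>U. ball x (\<epsilon> / 4) \<subseteq> V" for x
    using ball_subset_ball_net[OF K(2), of "\<epsilon> / 2" x] unfolding U_def by auto
  have "open_cover U"
    unfolding open_cover_def
  proof (intro conjI ballI)
    show "finite U" unfolding U_def using K(1) by simp
    show "open V" if "V \<in> U" for V using that unfolding U_def by auto
    have "x \<in> \<Union>U" for x
    proof -
      obtain V where "V \<in> U" "ball x (\<epsilon> / 4) \<subseteq> V" using lebesgue by blast
      moreover have "x \<in> ball x (\<epsilon> / 4)" using assms(2) by simp
      ultimately show ?thesis by blast
    qed
    then show "\<Union>U = UNIV" by blast
  qed
  moreover have "cover_diam U \<le> \<epsilon>"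
    unfolding cover_diam_def
  proof (subst Max_le_iff)
    show "finite (diameter ` U)" "diameter ` U \<noteq> {}" unfolding U_def using K(1) \<open>K \<noteq> {}\<close> by simp_all
    show "\<forall>a\<in>diameter ` U. a \<le> \<epsilon>"
      unfolding U_def using diameter_ball_le[of "\<epsilon> / 2"] assms(2) by auto
  qed
  moreover have "ereal (\<epsilon> / 4) \<in> {ereal \<delta> | \<delta>. \<delta> > 0 \<and> (\<forall>x. \<exists>V\<in>U. ball x \<delta> \<subseteq> V)}"
    using lebesgue assms(2) by (intro CollectI exI[of _ "\<epsilon> / 4"]) simp
  then have "ereal (\<epsilon> / 4) \<le> cover_leb U" unfolding cover_leb_def by (rule Sup_upper)
  ultimately show ?thesis using that by blast
qed

definition separated :: "('g \<Rightarrow> 'x::metric_space \<Rightarrow> 'x) \<Rightarrow> 'g set \<Rightarrow> real \<Rightarrow> 'x set \<Rightarrow> 'x set \<Rightarrow> bool" where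
  "separated act A \<epsilon> Z E \<longleftrightarrow> finite E \<and> E \<subseteq> Z \<and> (\<forall>x\<in>E. \<forall>y\<in>E. x \<noteq> y \<longrightarrow> \<epsilon> < bowen_dist act A x y)"

lemma card_separated_le_cover_num:
  fixes act :: "'g \<Rightarrow> 'x::metric_space \<Rightarrow> 'x"
  assumes "bounded (UNIV :: 'x set)" "finite A" "A \<noteq> {}"
    and "finite V" "\<Union>V = UNIV" "cover_diam V \<le> \<epsilon>" "separated act A \<epsilon> Z E"
  shows "card E \<le> cover_num (join_cover act A V) Z"
proof -
  have E: "finite E" "E \<subseteq> Z" and far: "\<And>x y. x \<in> E \<Longrightarrow> y \<in> E \<Longrightarrow> x \<noteq> y \<Longrightarrow> \<epsilon> < bowen_dist act A x y"
    using assms(7) unfolding separated_def by auto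
  have "Z \<subseteq> \<Union>(join_cover act A V)" unfolding Union_join_cover[OF assms(5)] by (rule subset_UNIV)
  then obtain W where W: "W \<subseteq> join_cover act A V" "Z \<subseteq> \<Union>W"
    "card W = cover_num (join_cover act A V) Z"
    by (rule cover_num_attained)
  have "\<forall>e\<in>E. \<exists>w. w \<in> W \<and> e \<in> w" using W(2) E(2) by blast
  from bchoice[OF this] obtain w where w: "\<forall>e\<in>E. w e \<in> W \<and> e \<in> w e" ..
  have "inj_on w E"
  proof (rule inj_onI, rule ccontr)
    fix x y assume "x \<in> E" "y \<in> E" "w x = w y" "x \<noteq> y"
    then have "w x \<in> join_cover act A V" "x \<in> w x" "y \<in> w x" using w W(1) by auto
    then have "bowen_dist act A x y \<le> cover_diam V" by (rule bowen_dist_le_cover_diam[OF assms(1-4)])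
    then show False using far[OF \<open>x \<in> E\<close> \<open>y \<in> E\<close> \<open>x \<noteq> y\<close>] assms(6) by linarith
  qed
  then have "card E = card (w ` E)" by (simp add: card_image)
  also have "\<dots> \<le> card W"
    using w finite_subset[OF W(1) finite_join_cover[OF assms(2,4)]] by (intro card_mono) auto
  finally show ?thesis using W(3) by simp
qed

context
  fixes act :: "'g \<Rightarrow> 'x::metric_space \<Rightarrow> 'x" and Z :: "'x set" and A :: "'g set" and \<epsilon> :: real
  assumes compact: "compact (UNIV :: 'x set)" and finite_A: "finite A" and A_nonempty: "A \<noteq> {}"
    and eps: "0 < \<epsilon>"
begin

lemma sep_num_eq_Max:
  "sep_num act Z A \<epsilon> = Max {card E | E. separated act A \<epsilon> Z E}"
  and finite_card_separated: "finite {card E | E. separated act A \<epsilon> Z E}"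
proof -
  obtain V :: "'x set set" where V: "open_cover V" "cover_diam V \<le> \<epsilon>"
    using exists_open_cover_diam_leb[OF compact eps] by blast
  have "\<forall>n\<in>{card E | E. separated act A \<epsilon> Z E}. n \<le> cover_num (join_cover act A V) Z"
    using card_separated_le_cover_num[OF compact_imp_bounded[OF compact] finite_A A_nonempty _ _ V(2)] V(1)
    unfolding open_cover_def by auto
  then show finite: "finite {card E | E. separated act A \<epsilon> Z E}"
    unfolding finite_nat_set_iff_bounded_le by blast
  have "separated act A \<epsilon> Z {}" unfolding separated_def by simp
  then have "{card E | E. separated act A \<epsilon> Z E} \<noteq> {}" by blast
  then show "sep_num act Z A \<epsilon> = Max {card E | E. separated act A \<epsilon> Z E}"
    unfolding sep_num_def separated_def[symmetric] by (rule cSup_eq_Max[OF finite])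
qed

lemma card_le_sep_num:
  assumes "separated act A \<epsilon> Z E"
  shows "card E \<le> sep_num act Z A \<epsilon>"
proof -
  have "card E \<in> {card E | E. separated act A \<epsilon> Z E}" using assms by blast
  then show ?thesis unfolding sep_num_eq_Max using finite_card_separated by (rule Max_ge[rotated])
qed

lemma sep_num_attained:
  obtains E where "separated act A \<epsilon> Z E" "card E = sep_num act Z A \<epsilon>"
proof -
  have "separated act A \<epsilon> Z {}" unfolding separated_def by simp
  then have "sep_num act Z A \<epsilon> \<in> {card E | E. separated act A \<epsilon> Z E}"
    unfolding sep_num_eq_Max using finite_card_separated by (intro Max_in) blast+
  then obtain E where "sep_num act Z A \<epsilon> = card E" "separated act A \<epsilon> Z E" by blast
  then show ?thesis by (intro that) simp_all
qed

lemma sep_num_pos: "Z \<noteq> {} \<Longrightarrow> 0 < sep_num act Z A \<epsilon>"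
proof -
  assume "Z \<noteq> {}"
  then obtain z where "z \<in> Z" by blast
  then have "separated act A \<epsilon> Z {z}" unfolding separated_def by simp
  then show ?thesis using card_le_sep_num[of "{z}"] by simp
qed

lemma maximal_separated_near:
  assumes "separated act A \<epsilon> Z E" "card E = sep_num act Z A \<epsilon>" "z \<in> Z"
  shows "\<exists>e\<in>E. bowen_dist act A z e \<le> \<epsilon>"
proof (rule ccontr)
  assume "\<not> ?thesis"
  then have far: "\<And>e. e \<in> E \<Longrightarrow> \<epsilon> < bowen_dist act A z e" by (simp add: not_le)
  have "z \<notin> E"
  proof
    assume "z \<in> E"
    then have "\<epsilon> < bowen_dist act A z z" by (rule far)
    moreover have "bowen_dist act A z z = 0" by (rule bowen_dist_self[OF A_nonempty])
    ultimately show False using eps by simp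
  qed
  have far': "\<epsilon> < bowen_dist act A e z" if "e \<in> E" for e
    using far[OF that] by (simp add: bowen_dist_commute)
  have "separated act A \<epsilon> Z (insert z E)"
    using assms(1,3) far far' unfolding separated_def by (simp add: ball_simps)
  then have "card (insert z E) \<le> sep_num act Z A \<epsilon>" by (rule card_le_sep_num)
  then show False using assms(1,2) \<open>z \<notin> E\<close> unfolding separated_def by simp
qed

lemma cover_num_le_sep_num:
  assumes "finite U" "ereal \<epsilon> < cover_leb U"
  shows "cover_num (join_cover act A U) Z \<le> sep_num act Z A \<epsilon>"
proof -
  obtain \<delta> where "\<epsilon> < \<delta>" and \<delta>: "\<forall>x. \<exists>V\<in>U. ball x \<delta> \<subseteq> V"
    using assms(2) unfolding cover_leb_def less_Sup_iff by auto
  then have "\<forall>x. \<exists>V. V \<in> U \<and> ball x \<delta> \<subseteq> V" by blast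
  from choice[OF this] obtain V where V: "\<forall>x. V x \<in> U \<and> ball x \<delta> \<subseteq> V x" ..
  obtain E where E: "separated act A \<epsilon> Z E" "card E = sep_num act Z A \<epsilon>"
    by (rule sep_num_attained)
  define W where "W = (\<lambda>e. \<Inter>g\<in>A. act g -` V (act g e)) ` E"
  have "(\<Inter>g\<in>A. act g -` V (act g e)) \<in> join_cover act A U" for e
    by (rule join_coverI) (use V in auto)
  then have "W \<subseteq> join_cover act A U" unfolding W_def by blast
  moreover have "Z \<subseteq> \<Union>W"
  proof
    fix z assume "z \<in> Z"
    then obtain e where "e \<in> E" "bowen_dist act A z e \<le> \<epsilon>"
      using maximal_separated_near[OF E] by blast
    have "act g z \<in> V (act g e)" if "g \<in> A" for g
    proof -
      have "dist (act g e) (act g z) < \<delta>"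
        using dist_le_bowen_dist[OF finite_A that, of act z e] \<open>bowen_dist act A z e \<le> \<epsilon>\<close> \<open>\<epsilon> < \<delta>\<close>
        by (simp add: dist_commute)
      then have "act g z \<in> ball (act g e) \<delta>" by simp
      then show ?thesis using V by blast
    qed
    then have "z \<in> (\<Inter>g\<in>A. act g -` V (act g e))" by simp
    then show "z \<in> \<Union>W" unfolding W_def using \<open>e \<in> E\<close> by blast
  qed
  ultimately have "cover_num (join_cover act A U) Z \<le> card W" by (rule cover_num_le)
  also have "\<dots> \<le> card E" unfolding W_def using E(1) unfolding separated_def by (intro card_image_le) simp
  finally show ?thesis using E(2) by simp
qed

end

section \<open>Normalised limits under rescaling\<close>

lemma Limsup_mult_tendsto_one_le:
  fixes k :: "'a \<Rightarrow> ereal" and q :: "'a \<Rightarrow> real"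
  assumes "F \<noteq> bot" "\<forall>\<^sub>F x in F. 0 \<le> k x" "(q \<longlongrightarrow> 1) F"
  shows "Limsup F (\<lambda>x. ereal (q x) * k x) \<le> Limsup F k"
    and "Liminf F (\<lambda>x. ereal (q x) * k x) \<le> Liminf F k"
proof -
  have "0 \<le> Liminf F k" using assms(2) by (rule Liminf_bounded)
  moreover have "Liminf F k \<le> Limsup F k" using assms(1) by (rule Liminf_le_Limsup)
  ultimately have nonneg: "Liminf F k \<noteq> -\<infinity>" "Limsup F k \<noteq> -\<infinity>" by auto
  have damped: "\<forall>\<^sub>F x in F. ereal r * (ereal (q x) * k x) \<le> k x" if "0 < r" "r < 1" for r
  proof -
    have "1 < 1 / r" using that by simp
    then have "\<forall>\<^sub>F x in F. q x < 1 / r" using assms(3) by (intro order_tendstoD(2))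
    with assms(2) show ?thesis
    proof eventually_elim
      case (elim x)
      then have "ereal (r * q x) * k x \<le> ereal 1 * k x"
        using that by (intro ereal_mult_right_mono) (simp_all add: field_simps)
      then show ?case by (simp add: mult.assoc[symmetric])
    qed
  qed
  show "Limsup F (\<lambda>x. ereal (q x) * k x) \<le> Limsup F k"
  proof (rule ereal_le_mult_one_interval[OF nonneg(2)])
    fix z :: ereal assume "0 < z" "z < 1"
    then obtain r where r: "z = ereal r" "0 < r" "r < 1" by (cases z) auto
    have "ereal r * Limsup F (\<lambda>x. ereal (q x) * k x) = Limsup F (\<lambda>x. ereal r * (ereal (q x) * k x))"
      using assms(1) r(2) by (simp add: Limsup_ereal_mult_left)
    also have "\<dots> \<le> Limsup F k" using damped[OF r(2,3)] by (rule Limsup_mono)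
    finally show "z * Limsup F (\<lambda>x. ereal (q x) * k x) \<le> Limsup F k" using r(1) by simp
  qed
  show "Liminf F (\<lambda>x. ereal (q x) * k x) \<le> Liminf F k"
  proof (rule ereal_le_mult_one_interval[OF nonneg(1)])
    fix z :: ereal assume "0 < z" "z < 1"
    then obtain r where r: "z = ereal r" "0 < r" "r < 1" by (cases z) auto
    have "ereal r * Liminf F (\<lambda>x. ereal (q x) * k x) = Liminf F (\<lambda>x. ereal r * (ereal (q x) * k x))"
      using assms(1) r(2) by (simp add: Liminf_ereal_mult_left)
    also have "\<dots> \<le> Liminf F k" using damped[OF r(2,3)] by (rule Liminf_mono)
    finally show "z * Liminf F (\<lambda>x. ereal (q x) * k x) \<le> Liminf F k" using r(1) by simp
  qed
qed

lemma Limsup_at_right_0_divide: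
  fixes f :: "real \<Rightarrow> 'a::complete_linorder"
  assumes "0 < c"
  shows "Limsup (at_right 0) (\<lambda>e. f (e / c)) = Limsup (at_right 0) f"
    and "Liminf (at_right 0) (\<lambda>e. f (e / c)) = Liminf (at_right 0) f"
proof -
  have "(\<lambda>e. e / c) = (*) (inverse c)" by (auto simp: divide_inverse)
  then have filter: "filtermap (\<lambda>e. e / c) (at_right 0) = at_right 0"
    using filtermap_times_pos_at_right[of "inverse c" 0] assms by simp
  have "inj (\<lambda>e::real. e / c)" using assms by (auto intro: injI)
  then show "Limsup (at_right 0) (\<lambda>e. f (e / c)) = Limsup (at_right 0) f"
    and "Liminf (at_right 0) (\<lambda>e. f (e / c)) = Liminf (at_right 0) f"
    using Limsup_filtermap_eq Liminf_filtermap_eq filter by metis+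
qed

text \<open>Rescaling \<open>\<epsilon>\<close> by a constant factor does not change the normalised limits, because
  \<open>ln (c / \<epsilon>) / ln (1 / \<epsilon>) \<longrightarrow> 1\<close>.\<close>

lemma normalized_limits_squeeze:
  fixes S X :: "real \<Rightarrow> ereal" and c :: real
  assumes "0 < c" and S_le_X: "\<And>e. 0 < e \<Longrightarrow> S e \<le> X e" and X_le_S: "\<And>e. 0 < e \<Longrightarrow> X e \<le> S (e / c)"
    and S_nonneg: "\<And>e. 0 < e \<Longrightarrow> 0 \<le> S e"
  shows "Limsup (at_right 0) (\<lambda>e. ereal (1 / ln (1 / e)) * X e) = Limsup (at_right 0) (\<lambda>e. ereal (1 / ln (1 / e)) * S e)"
    and "Liminf (at_right 0) (\<lambda>e. ereal (1 / ln (1 / e)) * X e) = Liminf (at_right 0) (\<lambda>e. ereal (1 / ln (1 / e)) * S e)"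
proof -
  define s where "s e = ereal (1 / ln (1 / e)) * S e" for e
  define x where "x e = ereal (1 / ln (1 / e)) * X e" for e
  define q where "q e = ln (c / e) / ln (1 / e)" for e :: real
  have small: "\<forall>\<^sub>F e in at_right 0. 0 < e \<and> e < 1 \<and> e < c"
    unfolding eventually_at_right_field using assms(1) by (intro exI[of _ "min 1 c"]) auto
  have s_le_x: "\<forall>\<^sub>F e in at_right 0. s e \<le> x e"
    using small unfolding s_def x_def
    by eventually_elim (intro ereal_mult_left_mono S_le_X, auto simp: ln_div)
  have x_le_s: "\<forall>\<^sub>F e in at_right 0. x e \<le> ereal (q e) * s (e / c)"
    using small
  proof eventually_elim
    case (elim e)
    have "x e \<le> ereal (1 / ln (1 / e)) * S (e / c)"
      unfolding x_def using elim by (intro ereal_mult_left_mono X_le_S) (auto simp: ln_div)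
    also have "1 / ln (1 / e) = q e * (1 / ln (1 / (e / c)))"
      using elim assms(1) by (simp add: q_def ln_div)
    finally show ?case unfolding s_def by (simp add: mult.assoc[symmetric])
  qed
  have s_nonneg: "\<forall>\<^sub>F e in at_right 0. 0 \<le> s (e / c)"
    using small unfolding s_def
    by eventually_elim (use assms(1) in \<open>auto intro!: ereal_0_le_mult S_nonneg simp: ln_div\<close>)
  have q: "(q \<longlongrightarrow> 1) (at_right 0)" unfolding q_def using assms(1) by real_asymp
  show "Limsup (at_right 0) x = Limsup (at_right 0) s"
  proof (rule antisym)
    have "Limsup (at_right 0) x \<le> Limsup (at_right 0) (\<lambda>e. ereal (q e) * s (e / c))"
      using x_le_s by (rule Limsup_mono)
    also have "\<dots> \<le> Limsup (at_right 0) (\<lambda>e. s (e / c))"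
      using s_nonneg q by (intro Limsup_mult_tendsto_one_le) simp_all
    also have "\<dots> = Limsup (at_right 0) s" using assms(1) by (rule Limsup_at_right_0_divide)
    finally show "Limsup (at_right 0) x \<le> Limsup (at_right 0) s" .
  qed (use s_le_x in \<open>rule Limsup_mono\<close>)
  show "Liminf (at_right 0) x = Liminf (at_right 0) s"
  proof (rule antisym)
    have "Liminf (at_right 0) x \<le> Liminf (at_right 0) (\<lambda>e. ereal (q e) * s (e / c))"
      using x_le_s by (rule Liminf_mono)
    also have "\<dots> \<le> Liminf (at_right 0) (\<lambda>e. s (e / c))"
      using s_nonneg q by (intro Limsup_mult_tendsto_one_le) simp_all
    also have "\<dots> = Liminf (at_right 0) s" using assms(1) by (rule Limsup_at_right_0_divide)
    finally show "Liminf (at_right 0) x \<le> Liminf (at_right 0) s" .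
  qed (use s_le_x in \<open>rule Liminf_mono\<close>)
qed

section \<open>Mean dimension via open covers\<close>

locale compact_invariant_set = invariant_set act Z
  for act :: "'g::group_add \<Rightarrow> 'x::metric_space \<Rightarrow> 'x" and Z +
  fixes F :: "nat \<Rightarrow> 'g set"
  assumes compact: "compact (UNIV :: 'x set)" and folner: "folner F"
begin

definition sep_entropy :: "real \<Rightarrow> ereal" where
  "sep_entropy \<epsilon> = limsup (\<lambda>n. ereal (ln (sep_num act Z (F n) \<epsilon>) / card (F n)))"

lemma sep_entropy_nonneg:
  assumes "0 < \<epsilon>"
  shows "0 \<le> sep_entropy \<epsilon>"
proof -
  have "0 \<le> liminf (\<lambda>n. ereal (ln (sep_num act Z (F n) \<epsilon>) / card (F n)))"
    using sep_num_pos[OF compact folner_finite[OF folner] folner_nonempty[OF folner] assms nonempty]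
    by (intro Liminf_bounded always_eventually) (simp add: Suc_le_eq)
  also have "\<dots> \<le> sep_entropy \<epsilon>" unfolding sep_entropy_def by (rule Liminf_le_Limsup) simp
  finally show ?thesis .
qed

lemma limsup_eq_h_top:
  assumes "open_cover U"
  shows "limsup (\<lambda>n. ereal (ln (cover_num (join_cover act (F n) U) Z) / card (F n))) = h_top act F Z U"
  using h_top_LIMSEQ[of U F] assms folner unfolding open_cover_def
  by (intro lim_imp_Limsup) (simp_all add: tendsto_ereal)

lemma sep_entropy_le_h_top:
  assumes "0 < \<epsilon>" "open_cover U" "cover_diam U \<le> \<epsilon>"
  shows "sep_entropy \<epsilon> \<le> h_top act F Z U"
proof -
  have "sep_num act Z (F n) \<epsilon> \<le> cover_num (join_cover act (F n) U) Z" for n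
  proof -
    obtain E where E: "separated act (F n) \<epsilon> Z E" "card E = sep_num act Z (F n) \<epsilon>"
      using sep_num_attained[OF compact folner_finite[OF folner] folner_nonempty[OF folner] assms(1)] .
    have "card E \<le> cover_num (join_cover act (F n) U) Z"
      using assms(2) unfolding open_cover_def
      by (intro card_separated_le_cover_num[OF compact_imp_bounded[OF compact] folner_finite[OF folner]
          folner_nonempty[OF folner] _ _ assms(3) E(1)]) auto
    then show ?thesis using E(2) by simp
  qed
  moreover have "0 < sep_num act Z (F n) \<epsilon>" for n
    by (rule sep_num_pos[OF compact folner_finite[OF folner] folner_nonempty[OF folner] assms(1) nonempty])
  ultimately have "ln (sep_num act Z (F n) \<epsilon>) / card (F n)
      \<le> ln (cover_num (join_cover act (F n) U) Z) / card (F n)" for n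
    by (intro divide_right_mono ln_mono) simp_all
  then have "sep_entropy \<epsilon> \<le> limsup (\<lambda>n. ereal (ln (cover_num (join_cover act (F n) U) Z) / card (F n)))"
    unfolding sep_entropy_def by (intro Limsup_mono always_eventually allI) simp
  then show ?thesis using limsup_eq_h_top[OF assms(2)] by simp
qed

lemma h_top_le_sep_entropy:
  assumes "0 < \<epsilon>" "open_cover U" "ereal (\<epsilon> / 4) \<le> cover_leb U"
  shows "h_top act F Z U \<le> sep_entropy (\<epsilon> / 8)"
proof -
  have "ereal (\<epsilon> / 8) < ereal (\<epsilon> / 4)" using assms(1) by simp
  then have "ereal (\<epsilon> / 8) < cover_leb U" using assms(3) by (rule less_le_trans)
  then have "cover_num (join_cover act (F n) U) Z \<le> sep_num act Z (F n) (\<epsilon> / 8)" for n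
    using assms(1,2) unfolding open_cover_def
    by (intro cover_num_le_sep_num[OF compact folner_finite[OF folner] folner_nonempty[OF folner]]) auto
  moreover have "0 < cover_num (join_cover act (F n) U) Z" for n
    using assms(2) folner_finite[OF folner] unfolding open_cover_def by (intro cover_num_join_pos) auto
  ultimately have "ln (cover_num (join_cover act (F n) U) Z) / card (F n)
      \<le> ln (sep_num act Z (F n) (\<epsilon> / 8)) / card (F n)" for n
    by (intro divide_right_mono ln_mono) simp_all
  then have "limsup (\<lambda>n. ereal (ln (cover_num (join_cover act (F n) U) Z) / card (F n))) \<le> sep_entropy (\<epsilon> / 8)"
    unfolding sep_entropy_def by (intro Limsup_mono always_eventually allI) simp
  then show ?thesis using limsup_eq_h_top[OF assms(2)] by simp
qed

lemma mdim_M_eq_if_squeezed: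
  assumes "\<And>\<epsilon>. 0 < \<epsilon> \<Longrightarrow> sep_entropy \<epsilon> \<le> X \<epsilon>" "\<And>\<epsilon>. 0 < \<epsilon> \<Longrightarrow> X \<epsilon> \<le> sep_entropy (\<epsilon> / 8)"
  shows "upper_mdim_M act Z F = Limsup (at_right 0) (\<lambda>\<epsilon>. ereal (1 / ln (1 / \<epsilon>)) * X \<epsilon>)"
    and "lower_mdim_M act Z F = Liminf (at_right 0) (\<lambda>\<epsilon>. ereal (1 / ln (1 / \<epsilon>)) * X \<epsilon>)"
proof -
  note squeeze = normalized_limits_squeeze[of 8 sep_entropy X, OF _ assms sep_entropy_nonneg, simplified]
  show "upper_mdim_M act Z F = Limsup (at_right 0) (\<lambda>\<epsilon>. ereal (1 / ln (1 / \<epsilon>)) * X \<epsilon>)"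
    by (simp only: upper_mdim_M_def squeeze(1) sep_entropy_def)
  show "lower_mdim_M act Z F = Liminf (at_right 0) (\<lambda>\<epsilon>. ereal (1 / ln (1 / \<epsilon>)) * X \<epsilon>)"
    by (simp only: lower_mdim_M_def squeeze(2) sep_entropy_def)
qed

lemma good_cover_exists:
  assumes "0 < \<epsilon>"
  obtains U :: "'x set set" where "open_cover U" "cover_diam U \<le> \<epsilon>" "ereal (\<epsilon> / 4) \<le> cover_leb U"
  using exists_open_cover_diam_leb[OF compact assms] by blast

lemma INF_h_top_squeezed:
  assumes "0 < \<epsilon>" "\<And>U. U \<in> \<U> \<Longrightarrow> open_cover U \<and> cover_diam U \<le> \<epsilon>"
    and "{U. open_cover U \<and> cover_diam U \<le> \<epsilon> \<and> ereal (\<epsilon> / 4) \<le> cover_leb U} \<subseteq> \<U>"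
  shows "sep_entropy \<epsilon> \<le> (INF U\<in>\<U>. ereal (h_top act F Z U))"
    and "(INF U\<in>\<U>. ereal (h_top act F Z U)) \<le> sep_entropy (\<epsilon> / 8)"
proof -
  show "sep_entropy \<epsilon> \<le> (INF U\<in>\<U>. ereal (h_top act F Z U))"
  proof (rule INF_greatest)
    fix U assume "U \<in> \<U>"
    then have "open_cover U" "cover_diam U \<le> \<epsilon>" using assms(2) by auto
    then show "sep_entropy \<epsilon> \<le> ereal (h_top act F Z U)" by (rule sep_entropy_le_h_top[OF assms(1)])
  qed
  obtain U :: "'x set set" where U: "open_cover U" "cover_diam U \<le> \<epsilon>" "ereal (\<epsilon> / 4) \<le> cover_leb U"
    using good_cover_exists[OF assms(1)] by blast
  then have "U \<in> \<U>" using assms(3) by auto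
  then have "(INF U\<in>\<U>. ereal (h_top act F Z U)) \<le> h_top act F Z U" by (rule INF_lower)
  also have "\<dots> \<le> sep_entropy (\<epsilon> / 8)" using h_top_le_sep_entropy[OF assms(1) U(1,3)] .
  finally show "(INF U\<in>\<U>. ereal (h_top act F Z U)) \<le> sep_entropy (\<epsilon> / 8)" .
qed

lemma SUP_h_top_squeezed:
  assumes "0 < \<epsilon>" "\<And>U. U \<in> \<U> \<Longrightarrow> open_cover U \<and> ereal (\<epsilon> / 4) \<le> cover_leb U"
    and "{U. open_cover U \<and> cover_diam U \<le> \<epsilon> \<and> ereal (\<epsilon> / 4) \<le> cover_leb U} \<subseteq> \<U>"
  shows "sep_entropy \<epsilon> \<le> (SUP U\<in>\<U>. ereal (h_top act F Z U))"
    and "(SUP U\<in>\<U>. ereal (h_top act F Z U)) \<le> sep_entropy (\<epsilon> / 8)"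
proof -
  obtain U :: "'x set set" where U: "open_cover U" "cover_diam U \<le> \<epsilon>" "ereal (\<epsilon> / 4) \<le> cover_leb U"
    using good_cover_exists[OF assms(1)] by blast
  then have "U \<in> \<U>" using assms(3) by auto
  have "sep_entropy \<epsilon> \<le> h_top act F Z U" using sep_entropy_le_h_top[OF assms(1) U(1,2)] .
  also have "\<dots> \<le> (SUP U\<in>\<U>. ereal (h_top act F Z U))" using \<open>U \<in> \<U>\<close> by (rule SUP_upper)
  finally show "sep_entropy \<epsilon> \<le> (SUP U\<in>\<U>. ereal (h_top act F Z U))" .
  show "(SUP U\<in>\<U>. ereal (h_top act F Z U)) \<le> sep_entropy (\<epsilon> / 8)"
  proof (rule SUP_least)
    fix U assume "U \<in> \<U>"
    then have "open_cover U" "ereal (\<epsilon> / 4) \<le> cover_leb U" using assms(2) by auto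
    then show "ereal (h_top act F Z U) \<le> sep_entropy (\<epsilon> / 8)" by (rule h_top_le_sep_entropy[OF assms(1)])
  qed
qed

end

theorem proposition3p4:
  fixes act :: "'g::group_add \<Rightarrow> 'x::metric_space \<Rightarrow> 'x"
    and Z :: "'x set" and F :: "nat \<Rightarrow> 'g set"
  assumes "countable (UNIV :: 'g set)" and "infinite (UNIV :: 'g set)"
    and "compact (UNIV :: 'x set)"
    and "\<And>x. act 0 x = x"
    and "\<And>g h x. act (g + h) x = act g (act h x)"
    and "\<And>g. continuous_on UNIV (act g)"
    and "Z \<noteq> {}" and "\<And>g. act g ` Z = Z"
    and "folner F"
  shows "
    (upper_mdim_M act Z F = Limsup (at_right 0) (\<lambda>eps. ereal (1 / ln (1 / eps)) *
      (INF U\<in>{U. open_cover U \<and> cover_diam U \<le> eps}. ereal (h_top act F Z U)))) \<and>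
    (lower_mdim_M act Z F = Liminf (at_right 0) (\<lambda>eps. ereal (1 / ln (1 / eps)) *
      (INF U\<in>{U. open_cover U \<and> cover_diam U \<le> eps}. ereal (h_top act F Z U)))) \<and>
    (upper_mdim_M act Z F = Limsup (at_right 0) (\<lambda>eps. ereal (1 / ln (1 / eps)) *
      (SUP U\<in>{U. open_cover U \<and> cover_diam U \<le> eps \<and> cover_leb U \<ge> ereal (eps / 4)}.
         ereal (h_top act F Z U)))) \<and>
    (lower_mdim_M act Z F = Liminf (at_right 0) (\<lambda>eps. ereal (1 / ln (1 / eps)) *
      (SUP U\<in>{U. open_cover U \<and> cover_diam U \<le> eps \<and> cover_leb U \<ge> ereal (eps / 4)}.
         ereal (h_top act F Z U)))) \<and>
    (upper_mdim_M act Z F = Limsup (at_right 0) (\<lambda>eps. ereal (1 / ln (1 / eps)) *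
      (SUP U\<in>{U. open_cover U \<and> cover_leb U \<ge> ereal (eps / 4)}. ereal (h_top act F Z U)))) \<and>
    (lower_mdim_M act Z F = Liminf (at_right 0) (\<lambda>eps. ereal (1 / ln (1 / eps)) *
      (SUP U\<in>{U. open_cover U \<and> cover_leb U \<ge> ereal (eps / 4)}. ereal (h_top act F Z U))))"
proof -
  interpret compact_invariant_set act Z F
    using assms(3,5,7-9) by unfold_locales auto
  show ?thesis
    by (intro conjI mdim_M_eq_if_squeezed INF_h_top_squeezed SUP_h_top_squeezed) auto
qed

end
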